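(* Let $X\in\mathbb{R}^d$ be a random vector with mean $\theta_0$ and covariance matrix $\Sigma_0$, and assume (A1): $\Sigma_0$ is a finite covariance matrix of full rank $d$. Let $X_1,\dots,X_n$ ($n>d$) be independent copies of $X$, $\Theta_n$ the interior of their convex hull, $\tilde\theta$ the sample mean and $l(\theta)$ the empirical log-likelihood ratio for the mean. Let $h_n^C:\Theta_n\to\mathbb{R}^d$ be the composite similarity mapping $h_n^C(\theta)=\tilde\theta+\bigl(1+\frac{l(\theta)}{2n}\bigr)(\theta-\tilde\theta)$, which is a bijection onto $\mathbb{R}^d$, and let $h_n^{-C}:\mathbb{R}^d\to\Theta_n$ denote its inverse. Set $\theta_0'=h_n^{-C}(\theta_0)$. Then (i) $\theta_0'$ lies on the line segment $[\tilde\theta,\theta_0]$ joining $\tilde\theta$ and $\theta_0$; and (ii) $\theta_0'-\theta_0=O_p(n^{-3/2})$ as $n\to\infty$.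
   Context: For $\theta\in\mathbb{R}^d$, the empirical likelihood ratio is $R(\theta)=\sup\{\prod_{i=1}^n nw_i : \sum_{i=1}^n w_i(X_i-\theta)=0,\ w_i\ge 0,\ \sum_{i=1}^n w_i=1\}$, and $l(\theta)=-2\log R(\theta)$; $l$ is finite exactly on $\Theta_n$ and $l(\tilde\theta)=0$. Standing convention: whenever (A1) is assumed, the convex hull of $X_1,\dots,X_n$ is understood to be nondegenerate (this holds with probability one). *)

theory Defs
  imports "HOL-Analysis.Analysis" "HOL-Probability.Probability"
begin

text \<open>Sample points are given as a family x :: nat => real^'d, the sample of size n
being x 0, ..., x (n-1).\<close>

definition smean :: "(nat \<Rightarrow> real^'d) \<Rightarrow> nat \<Rightarrow> real^'d" where
  "smean x n = (1 / real n) *\<^sub>R (\<Sum>i<n. x i)"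

definition Theta_n :: "(nat \<Rightarrow> real^'d) \<Rightarrow> nat \<Rightarrow> (real^'d) set" where
  "Theta_n x n = interior (convex hull (x ` {..<n}))"

definition ELR :: "(nat \<Rightarrow> real^'d) \<Rightarrow> nat \<Rightarrow> real^'d \<Rightarrow> real" where
  "ELR x n \<theta> = Sup {(\<Prod>i<n. real n * w i) | w :: nat \<Rightarrow> real.
      (\<forall>i<n. w i \<ge> 0) \<and> (\<Sum>i<n. w i) = 1 \<and> (\<Sum>i<n. w i *\<^sub>R (x i - \<theta>)) = 0}"

text \<open>Empirical log-likelihood ratio l(theta) = -2 log R(theta) (used only on Theta_n).\<close>
definition ELL :: "(nat \<Rightarrow> real^'d) \<Rightarrow> nat \<Rightarrow> real^'d \<Rightarrow> real" where
  "ELL x n \<theta> = - 2 * ln (ELR x n \<theta>)"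

definition hC :: "(nat \<Rightarrow> real^'d) \<Rightarrow> nat \<Rightarrow> real^'d \<Rightarrow> real^'d" where
  "hC x n \<theta> = smean x n + (1 + ELL x n \<theta> / (2 * real n)) *\<^sub>R (\<theta> - smean x n)"

definition hC_inv :: "(nat \<Rightarrow> real^'d) \<Rightarrow> nat \<Rightarrow> real^'d \<Rightarrow> real^'d" where
  "hC_inv x n y = (THE \<theta>. \<theta> \<in> Theta_n x n \<and> hC x n \<theta> = y)"

end

theory Submission
  imports Defs
begin

(*
  Mixing weights shows that l = -2 log R is
  convex on Theta_n; it vanishes at the sample mean and, by a supporting-hyperplane argument, tends
  to infinity at the frontier of the convex hull. Along every ray from the sample mean, h_n^C is
  therefore monotone from the sample mean to infinity, so it is a bijection, theta0' lies on the
  segment towards theta0, and |theta0' - theta0| = l(theta0') / (2n) * |theta0' - sample mean|.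

  For the rate, write theta0' - sample mean = L a with the empirical linear map
  L a = 1/n \<Sum>i. (a \<bullet> (phi X_i - mean of phi X_j)) (X_i - theta0), where phi is a bounded
  transform of X - theta0. The weights (1 + a \<bullet> (phi X_i - mean of phi X_j)) / n then represent
  theta0', so l(theta0') \<le> 4 n |a|^2. By Chebyshev's inequality, L is close to a fixed invertible
  matrix (invertible because Sigma0 has full rank) and |sample mean - theta0| = O_p(n^(-1/2)).
  Hence |a| = O_p(n^(-1/2)), l(theta0') = O_p(1) and |theta0' - theta0| = O_p(n^(-3/2)).
*)

section \<open>Empirical likelihood as a maximum over weights\<close>

definition el_weights :: "(nat \<Rightarrow> real^'d) \<Rightarrow> nat \<Rightarrow> real^'d \<Rightarrow> (nat \<Rightarrow> real) \<Rightarrow> bool" where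
  "el_weights x n \<theta> w \<longleftrightarrow> (\<forall>i<n. 0 \<le> w i) \<and> sum w {..<n} = 1 \<and> (\<Sum>i<n. w i *\<^sub>R x i) = \<theta>"

definition el_prod :: "nat \<Rightarrow> (nat \<Rightarrow> real) \<Rightarrow> real" where
  "el_prod n w = (\<Prod>i<n. real n * w i)"

lemma ELR_eq_Sup_el_prod: "ELR x n \<theta> = Sup (el_prod n ` Collect (el_weights x n \<theta>))"
proof -
  have "(\<Sum>i<n. w i *\<^sub>R (x i - \<theta>)) = (\<Sum>i<n. w i *\<^sub>R x i) - (\<Sum>i<n. w i) *\<^sub>R \<theta>" for w
    by (simp add: scaleR_diff_right sum_subtractf scaleR_sum_left)
  then have "{(\<Prod>i<n. real n * w i) | w. (\<forall>i<n. w i \<ge> 0) \<and> (\<Sum>i<n. w i) = 1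
      \<and> (\<Sum>i<n. w i *\<^sub>R (x i - \<theta>)) = 0} = el_prod n ` Collect (el_weights x n \<theta>)"
    unfolding el_weights_def el_prod_def by auto
  then show ?thesis unfolding ELR_def by simp
qed

lemma el_weights_le_one:
  assumes "el_weights x n \<theta> w" "i < n"
  shows "w i \<le> 1"
proof -
  have "w i \<le> sum w {..<n}"
    by (rule member_le_sum) (use assms in \<open>auto simp: el_weights_def\<close>)
  then show ?thesis using assms by (simp add: el_weights_def)
qed

lemma el_prod_pos_iff:
  assumes "el_weights x n \<theta> w"
  shows "0 < el_prod n w \<longleftrightarrow> (\<forall>i<n. 0 < w i)"
proof
  assume pos: "0 < el_prod n w"
  show "\<forall>i<n. 0 < w i"
  proof (intro allI impI)
    fix i assume i: "i < n"
    have "w i \<noteq> 0"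
    proof
      assume "w i = 0"
      then have "el_prod n w = 0" unfolding el_prod_def using i by (intro prod_zero) auto
      then show False using pos by simp
    qed
    then show "0 < w i" using assms i by (auto simp: el_weights_def order.order_iff_strict)
  qed
next
  assume "\<forall>i<n. 0 < w i"
  then show "0 < el_prod n w" unfolding el_prod_def by (intro prod_pos) auto
qed

lemma ln_el_prod:
  assumes "\<And>i. i < n \<Longrightarrow> 0 < w i"
  shows "ln (el_prod n w) = (\<Sum>i<n. ln (real n * w i))"
  unfolding el_prod_def
proof (rule ln_prod)
  fix i assume "i \<in> {..<n}"
  then show "real n * w i \<noteq> 0" using assms[of i] by simp
qed simp

text \<open>AM-GM, in the form \<open>ln t \<le> t - 1\<close>.\<close>

lemma el_prod_le_one:
  assumes w: "el_weights x n \<theta> w"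
  shows "el_prod n w \<le> 1"
proof (cases "\<forall>i<n. 0 < w i")
  case False
  then have "\<not> 0 < el_prod n w" using el_prod_pos_iff[OF w] by blast
  then show ?thesis by linarith
next
  case pos: True
  have "ln (el_prod n w) = (\<Sum>i<n. ln (real n * w i))" using pos by (simp add: ln_el_prod)
  also have "\<dots> \<le> (\<Sum>i<n. real n * w i - 1)"
    using pos by (intro sum_mono ln_le_minus_one) auto
  also have "\<dots> = real n * sum w {..<n} - real n"
    by (simp add: sum_subtractf sum_distrib_left)
  also have "\<dots> = 0" using w unfolding el_weights_def by simp
  finally show ?thesis using el_prod_pos_iff[OF w] pos by simp
qed

lemma el_weights_convex_combination:
  assumes "el_weights x n a v" "el_weights x n b w" "0 \<le> t" "t \<le> 1"
  shows "el_weights x n ((1 - t) *\<^sub>R a + t *\<^sub>R b) (\<lambda>i. (1 - t) * v i + t * w i)"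
proof -
  have "(\<Sum>i<n. ((1 - t) * v i + t * w i) *\<^sub>R x i)
      = (1 - t) *\<^sub>R (\<Sum>i<n. v i *\<^sub>R x i) + t *\<^sub>R (\<Sum>i<n. w i *\<^sub>R x i)"
    by (simp add: sum.distrib scaleR_add_left scaleR_sum_right)
  moreover have "(\<Sum>i<n. (1 - t) * v i + t * w i) = (1 - t) * sum v {..<n} + t * sum w {..<n}"
    by (simp add: sum.distrib sum_distrib_left)
  ultimately show ?thesis using assms unfolding el_weights_def by auto
qed

lemma el_weights_exist_iff: "(\<exists>w. el_weights x n \<theta> w) \<longleftrightarrow> \<theta> \<in> convex hull (x ` {..<n})"
proof
  assume "\<exists>w. el_weights x n \<theta> w"
  then obtain w where w: "el_weights x n \<theta> w" ..
  have "(\<Sum>i<n. w i *\<^sub>R x i) \<in> convex hull (x ` {..<n})"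
    by (rule convex_sum) (use w in \<open>auto simp: el_weights_def intro: hull_inc\<close>)
  then show "\<theta> \<in> convex hull (x ` {..<n})" using w by (simp add: el_weights_def)
next
  have "convex {\<theta>. \<exists>w. el_weights x n \<theta> w}"
    unfolding convex_alt using el_weights_convex_combination by blast
  moreover have "el_weights x n (x j) (\<lambda>i. if i = j then 1 else 0)" if "j < n" for j
  proof -
    have "(\<Sum>i<n. (if i = j then 1 else 0) *\<^sub>R x i) = (\<Sum>i<n. if i = j then x j else 0)"
      by (rule sum.cong) auto
    then show ?thesis using that by (simp add: el_weights_def)
  qed
  then have "x ` {..<n} \<subseteq> {\<theta>. \<exists>w. el_weights x n \<theta> w}" by blast
  ultimately have "convex hull (x ` {..<n}) \<subseteq> {\<theta>. \<exists>w. el_weights x n \<theta> w}"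
    by (rule hull_minimal[rotated])
  then show "\<theta> \<in> convex hull (x ` {..<n}) \<Longrightarrow> \<exists>w. el_weights x n \<theta> w" by blast
qed

lemma el_prod_le_ELR: "el_weights x n \<theta> w \<Longrightarrow> el_prod n w \<le> ELR x n \<theta>"
  unfolding ELR_eq_Sup_el_prod
  by (rule cSup_upper) (use el_prod_le_one in \<open>auto intro!: bdd_aboveI[where M = 1]\<close>)

lemma ELR_le_bound:
  assumes "\<theta> \<in> convex hull (x ` {..<n})" "\<And>w. el_weights x n \<theta> w \<Longrightarrow> el_prod n w \<le> C"
  shows "ELR x n \<theta> \<le> C"
  unfolding ELR_eq_Sup_el_prod using assms el_weights_exist_iff[of x n \<theta>] by (intro cSup_least) auto

lemma ELR_le_one: "\<theta> \<in> convex hull (x ` {..<n}) \<Longrightarrow> ELR x n \<theta> \<le> 1"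
  using ELR_le_bound el_prod_le_one by blast

lemma el_weights_smean: "0 < n \<Longrightarrow> el_weights x n (smean x n) (\<lambda>_. 1 / real n)"
  unfolding el_weights_def smean_def by (simp add: scaleR_sum_right)

lemma ELR_smean:
  assumes "0 < n"
  shows "ELR x n (smean x n) = 1"
proof (rule antisym)
  show "ELR x n (smean x n) \<le> 1"
    using el_weights_exist_iff el_weights_smean[OF assms] ELR_le_one by blast
  show "1 \<le> ELR x n (smean x n)"
    using el_prod_le_ELR[OF el_weights_smean[OF assms]] assms by (simp add: el_prod_def)
qed

lemma smean_in_Theta_n:
  assumes n: "0 < n" and ne: "Theta_n x n \<noteq> {}"
  shows "smean x n \<in> Theta_n x n"
proof -
  define H where "H = convex hull (x ` {..<n})"
  obtain q where q: "q \<in> interior H" using ne H_def Theta_n_def by auto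
  then have "q \<in> H" using interior_subset by auto
  then obtain v where v: "el_weights x n q v" using el_weights_exist_iff H_def by blast
  define \<rho> :: real where "\<rho> = 1 / (real n + 1)"
  have \<rho>: "0 < \<rho>" "\<rho> < 1" "\<rho> \<le> 1 / real n" using n unfolding \<rho>_def by (auto simp: field_simps)
  define c1 where "c1 = 1 / (real n * (1 - \<rho>))"
  define c2 where "c2 = \<rho> / (1 - \<rho>)"
  define p where "p = c1 *\<^sub>R (\<Sum>i<n. x i) - c2 *\<^sub>R q"
  text \<open>The sample mean is a proper convex combination of \<open>q\<close> and the point \<open>p\<close> of \<open>H\<close>
    obtained by pushing it away from \<open>q\<close>; \<open>p\<close> has the weights \<open>c1 - c2 * v i \<ge> 0\<close>.\<close>
  have "el_weights x n p (\<lambda>i. c1 - c2 * v i)"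
  proof -
    have "0 \<le> c1 - c2 * v i" if "i < n" for i
    proof -
      have "0 \<le> v i" "v i \<le> 1" using v that el_weights_le_one[OF v that] by (auto simp: el_weights_def)
      then have "\<rho> * v i \<le> 1 / real n" using \<rho> mult_left_le[of "v i" \<rho>] by linarith
      then have "\<rho> * v i / (1 - \<rho>) \<le> (1 / real n) / (1 - \<rho>)"
        using \<rho> by (intro divide_right_mono) auto
      then show ?thesis unfolding c1_def c2_def by simp
    qed
    moreover have "(\<Sum>i<n. c1 - c2 * v i) = 1"
    proof -
      have "(\<Sum>i<n. c1 - c2 * v i) = real n * c1 - c2 * sum v {..<n}"
        by (simp add: sum_subtractf sum_distrib_left)
      also have "\<dots> = 1" using v n \<rho> unfolding c1_def c2_def by (simp add: el_weights_def field_simps)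
      finally show ?thesis .
    qed
    moreover have "(\<Sum>i<n. (c1 - c2 * v i) *\<^sub>R x i) = p"
    proof -
      have "q = (\<Sum>i<n. v i *\<^sub>R x i)" using v by (simp add: el_weights_def)
      then show ?thesis unfolding p_def by (simp add: scaleR_diff_left sum_subtractf scaleR_sum_right)
    qed
    ultimately show ?thesis unfolding el_weights_def by simp
  qed
  then have pH: "p \<in> H" using el_weights_exist_iff H_def by blast
  have sp: "smean x n = (1 - \<rho>) *\<^sub>R p + \<rho> *\<^sub>R q"
  proof -
    have "(1 - \<rho>) *\<^sub>R p + \<rho> *\<^sub>R q
        = ((1 - \<rho>) * c1) *\<^sub>R (\<Sum>i<n. x i) + (\<rho> - (1 - \<rho>) * c2) *\<^sub>R q"
      unfolding p_def by (simp add: algebra_simps)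
    also have "(1 - \<rho>) * c1 = 1 / real n" unfolding c1_def using \<rho> by simp
    also have "\<rho> - (1 - \<rho>) * c2 = 0" unfolding c2_def using \<rho> by simp
    finally show ?thesis unfolding smean_def by simp
  qed
  show ?thesis
  proof (cases "p = q")
    case True
    then have "smean x n = q" using sp by (simp add: algebra_simps)
    then show ?thesis using q H_def by (simp add: Theta_n_def)
  next
    case False
    have "smean x n \<in> open_segment q p"
      unfolding in_segment using False \<rho> sp
      by (intro conjI exI[of _ "1 - \<rho>"]) (auto simp: algebra_simps)
    moreover have "open_segment q p \<subseteq> interior H"
      by (rule in_interior_closure_convex_segment) (use q pH closure_subset H_def in auto)
    ultimately show ?thesis using H_def Theta_n_def by auto
  qed
qed

lemma Theta_n_imp_pos_el_weights:
  assumes n: "0 < n" and \<theta>: "\<theta> \<in> Theta_n x n"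
  obtains w where "el_weights x n \<theta> w" "\<And>i. i < n \<Longrightarrow> 0 < w i"
proof -
  define s where "s = smean x n"
  obtain e where e: "0 < e" "ball \<theta> e \<subseteq> convex hull (x ` {..<n})"
    using \<theta> unfolding Theta_n_def by (meson interior_subset openE open_interior subset_trans)
  define \<delta> where "\<delta> = e / (2 * (norm (\<theta> - s) + 1))"
  have "0 < 2 * (norm (\<theta> - s) + 1)" by (simp add: add_nonneg_pos)
  then have \<delta>: "0 < \<delta>" unfolding \<delta>_def using e by simp
  define p where "p = \<theta> + \<delta> *\<^sub>R (\<theta> - s)"
  have "dist \<theta> p = \<delta> * norm (\<theta> - s)" unfolding p_def dist_norm using \<delta> by simp
  also have "\<dots> = e * (norm (\<theta> - s) / (2 * (norm (\<theta> - s) + 1)))" unfolding \<delta>_def by simp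
  also have "\<dots> < e * 1"
  proof (rule mult_strict_left_mono[OF _ e(1)])
    show "norm (\<theta> - s) / (2 * (norm (\<theta> - s) + 1)) < 1" by (simp add: field_simps add_pos_nonneg)
  qed
  finally have "p \<in> ball \<theta> e" by simp
  then have "p \<in> convex hull (x ` {..<n})" using e by blast
  then obtain v where v: "el_weights x n p v" using el_weights_exist_iff by blast
  text \<open>\<open>\<theta>\<close> lies strictly between \<open>p\<close> and the sample mean, whose weights are all positive.\<close>
  define t where "t = \<delta> / (1 + \<delta>)"
  have t: "0 < t" "t < 1" unfolding t_def using \<delta> by auto
  have "(1 - t) *\<^sub>R p + t *\<^sub>R s = \<theta>"
  proof -
    have "1 - t = 1 / (1 + \<delta>)" unfolding t_def using \<delta> by (simp add: field_simps)
    then have "(1 - t) *\<^sub>R p + t *\<^sub>R s = (1 / (1 + \<delta>)) *\<^sub>R (p + \<delta> *\<^sub>R s)"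
      unfolding t_def by (simp add: scaleR_add_right divide_inverse)
    also have "p + \<delta> *\<^sub>R s = (1 + \<delta>) *\<^sub>R \<theta>" unfolding p_def by (simp add: algebra_simps)
    finally show ?thesis using \<delta> by simp
  qed
  then have "el_weights x n \<theta> (\<lambda>i. (1 - t) * v i + t * (1 / real n))"
    using el_weights_convex_combination[OF v el_weights_smean[OF n], of t] t s_def by simp
  moreover have "0 < (1 - t) * v i + t * (1 / real n)" if "i < n" for i
    using v that t n by (intro add_nonneg_pos) (auto simp: el_weights_def)
  ultimately show ?thesis using that by blast
qed

lemma ELR_pos:
  assumes "0 < n" "\<theta> \<in> Theta_n x n"
  shows "0 < ELR x n \<theta>"
proof -
  obtain w where w: "el_weights x n \<theta> w" "\<And>i. i < n \<Longrightarrow> 0 < w i"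
    using Theta_n_imp_pos_el_weights[OF assms] by blast
  then have "0 < el_prod n w" using el_prod_pos_iff by blast
  also have "\<dots> \<le> ELR x n \<theta>" by (rule el_prod_le_ELR[OF w(1)])
  finally show ?thesis .
qed

section \<open>Log-concavity of the empirical likelihood ratio\<close>

lemma mult_ln_ELR_le:
  assumes n: "0 < n" and \<theta>: "\<theta> \<in> Theta_n x n" and c: "0 \<le> c"
    and bound: "\<And>w. el_weights x n \<theta> w \<Longrightarrow> (\<And>i. i < n \<Longrightarrow> 0 < w i) \<Longrightarrow> c * ln (el_prod n w) \<le> C"
  shows "c * ln (ELR x n \<theta>) \<le> C"
proof (cases "c = 0")
  case True
  obtain w where "el_weights x n \<theta> w" "\<And>i. i < n \<Longrightarrow> 0 < w i"
    using Theta_n_imp_pos_el_weights[OF n \<theta>] by blast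
  then have "c * ln (el_prod n w) \<le> C" by (rule bound)
  then show ?thesis using True by simp
next
  case False
  then have c': "0 < c" using c by simp
  have "ELR x n \<theta> \<le> exp (C / c)"
  proof (rule ELR_le_bound)
    show "\<theta> \<in> convex hull (x ` {..<n})" using \<theta> interior_subset unfolding Theta_n_def by blast
    fix w assume w: "el_weights x n \<theta> w"
    show "el_prod n w \<le> exp (C / c)"
    proof (cases "0 < el_prod n w")
      case True
      then have "c * ln (el_prod n w) \<le> C" using bound[OF w] el_prod_pos_iff[OF w] by blast
      then have "ln (el_prod n w) \<le> C / c" using c' by (simp add: field_simps mult.commute)
      then show ?thesis using True by (metis exp_le_cancel_iff exp_ln)
    next
      case False
      then have "el_prod n w \<le> 0" by simp
      also have "0 < exp (C / c)" by simp
      finally show ?thesis by simp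
    qed
  qed
  then have "ln (ELR x n \<theta>) \<le> C / c" using ELR_pos[OF n \<theta>] by (metis ln_exp ln_le_cancel_iff exp_gt_zero)
  then show ?thesis using c' by (simp add: field_simps mult.commute)
qed

lemma convex_combination_pos:
  fixes a b t :: real
  assumes "0 < a" "0 < b" "0 \<le> t" "t \<le> 1"
  shows "0 < (1 - t) * a + t * b"
proof (cases "t = 1")
  case False
  then show ?thesis using assms by (intro add_pos_nonneg) auto
qed (use assms in simp)

lemma ln_el_prod_convex_combination:
  assumes v: "\<And>i. i < n \<Longrightarrow> 0 < v i" and w: "\<And>i. i < n \<Longrightarrow> 0 < w i" and t: "0 \<le> t" "t \<le> 1"
  shows "(1 - t) * ln (el_prod n v) + t * ln (el_prod n w)
           \<le> ln (el_prod n (\<lambda>i. (1 - t) * v i + t * w i))"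
proof -
  have mix: "0 < (1 - t) * v i + t * w i" if "i < n" for i
    using v[OF that] w[OF that] t by (rule convex_combination_pos)
  have "(1 - t) * ln (el_prod n v) + t * ln (el_prod n w)
      = (\<Sum>i<n. (1 - t) * ln (real n * v i) + t * ln (real n * w i))"
    using v w by (simp add: ln_el_prod sum.distrib sum_distrib_left)
  also have "\<dots> \<le> (\<Sum>i<n. ln (real n * ((1 - t) * v i + t * w i)))"
  proof (rule sum_mono)
    fix i assume "i \<in> {..<n}"
    then have pos: "0 < real n * v i" "0 < real n * w i" using v w by auto
    have "(1 - t) * ln (real n * v i) + t * ln (real n * w i)
        \<le> ln ((1 - t) *\<^sub>R (real n * v i) + t *\<^sub>R (real n * w i))"
      using concave_onD[OF ln_concave, of t "real n * v i" "real n * w i"] t pos by simp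
    then show "(1 - t) * ln (real n * v i) + t * ln (real n * w i)
        \<le> ln (real n * ((1 - t) * v i + t * w i))"
      by (simp add: algebra_simps)
  qed
  also have "\<dots> = ln (el_prod n (\<lambda>i. (1 - t) * v i + t * w i))"
    using mix by (simp add: ln_el_prod)
  finally show ?thesis .
qed

lemma convex_Theta_n: "convex (Theta_n x n)"
  unfolding Theta_n_def by (simp add: convex_interior)

lemma ELR_log_concave:
  assumes n: "0 < n" and a: "a \<in> Theta_n x n" and b: "b \<in> Theta_n x n" and t: "0 \<le> t" "t \<le> 1"
  shows "(1 - t) * ln (ELR x n a) + t * ln (ELR x n b) \<le> ln (ELR x n ((1 - t) *\<^sub>R a + t *\<^sub>R b))"
proof -
  define m where "m = (1 - t) *\<^sub>R a + t *\<^sub>R b"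
  have m: "m \<in> Theta_n x n" unfolding m_def using convexD_alt[OF convex_Theta_n a b t] by simp
  have pos_mix: "(1 - t) * ln (el_prod n v) + t * ln (el_prod n w) \<le> ln (ELR x n m)"
    if v: "el_weights x n a v" "\<And>i. i < n \<Longrightarrow> 0 < v i"
      and w: "el_weights x n b w" "\<And>i. i < n \<Longrightarrow> 0 < w i" for v w
  proof -
    have mw: "el_weights x n m (\<lambda>i. (1 - t) * v i + t * w i)"
      unfolding m_def by (rule el_weights_convex_combination[OF v(1) w(1) t])
    have "0 < el_prod n (\<lambda>i. (1 - t) * v i + t * w i)"
      using v(2) w(2) t convex_combination_pos el_prod_pos_iff[OF mw] by blast
    then have "ln (el_prod n (\<lambda>i. (1 - t) * v i + t * w i)) \<le> ln (ELR x n m)"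
      using el_prod_le_ELR[OF mw] by simp
    moreover have "(1 - t) * ln (el_prod n v) + t * ln (el_prod n w)
        \<le> ln (el_prod n (\<lambda>i. (1 - t) * v i + t * w i))"
      by (rule ln_el_prod_convex_combination) (use v(2) w(2) t in auto)
    ultimately show ?thesis by linarith
  qed
  have "t * ln (ELR x n b) \<le> ln (ELR x n m) - (1 - t) * ln (ELR x n a)"
  proof (rule mult_ln_ELR_le[OF n b t(1)])
    fix w assume w: "el_weights x n b w" "\<And>i. i < n \<Longrightarrow> 0 < w i"
    have "(1 - t) * ln (ELR x n a) \<le> ln (ELR x n m) - t * ln (el_prod n w)"
      using pos_mix[OF _ _ w] t by (intro mult_ln_ELR_le[OF n a]) (auto simp: algebra_simps)
    then show "t * ln (el_prod n w) \<le> ln (ELR x n m) - (1 - t) * ln (ELR x n a)" by linarith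
  qed
  then show ?thesis unfolding m_def by simp
qed

lemma ELL_convex_on:
  assumes "0 < n"
  shows "convex_on (Theta_n x n) (ELL x n)"
proof (rule convex_onI)
  show "convex (Theta_n x n)" by (rule convex_Theta_n)
  fix t :: real and a b assume "0 < t" "t < 1" "a \<in> Theta_n x n" "b \<in> Theta_n x n"
  then show "ELL x n ((1 - t) *\<^sub>R a + t *\<^sub>R b) \<le> (1 - t) * ELL x n a + t * ELL x n b"
    using ELR_log_concave[OF assms, of a x b t] unfolding ELL_def by simp
qed

lemma continuous_on_ELL: "0 < n \<Longrightarrow> continuous_on (Theta_n x n) (ELL x n)"
  by (rule convex_on_continuous[OF _ ELL_convex_on]) (simp add: Theta_n_def)

lemma ELL_nonneg:
  assumes "0 < n" "\<theta> \<in> Theta_n x n"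
  shows "0 \<le> ELL x n \<theta>"
proof -
  have "ELR x n \<theta> \<le> 1" using ELR_le_one assms(2) interior_subset unfolding Theta_n_def by blast
  then show ?thesis using ELR_pos[OF assms] unfolding ELL_def by simp
qed

lemma ELL_smean: "0 < n \<Longrightarrow> ELL x n (smean x n) = 0"
  by (simp add: ELL_def ELR_smean)

lemma ELL_mono_ray:
  assumes n: "0 < n" and ne: "Theta_n x n \<noteq> {}"
    and \<theta>: "\<theta> \<in> Theta_n x n" and l: "0 \<le> l" "l \<le> 1"
  shows "ELL x n (smean x n + l *\<^sub>R (\<theta> - smean x n)) \<le> ELL x n \<theta>"
proof -
  have "smean x n + l *\<^sub>R (\<theta> - smean x n) = (1 - l) *\<^sub>R smean x n + l *\<^sub>R \<theta>"
    by (simp add: algebra_simps)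
  moreover have "ELL x n ((1 - l) *\<^sub>R smean x n + l *\<^sub>R \<theta>) \<le> l * ELL x n \<theta>"
    using convex_onD[OF ELL_convex_on[OF n] l(1) l(2) smean_in_Theta_n[OF n ne] \<theta>]
    by (simp add: ELL_smean[OF n])
  moreover have "l * ELL x n \<theta> \<le> ELL x n \<theta>"
    using ELL_nonneg[OF n \<theta>] l by (simp add: mult_left_le_one_le)
  ultimately show ?thesis by simp
qed

section \<open>The composite similarity mapping\<close>

text \<open>The weight on \<open>x j\<close> is at most \<open>(a \<bullet> \<theta> - h) / (a \<bullet> x j - h)\<close>; all other factors of the
  product are at most \<open>n\<close>.\<close>

lemma ELR_le_halfspace:
  assumes \<theta>: "\<theta> \<in> convex hull (x ` {..<n})" and hx: "\<And>i. i < n \<Longrightarrow> h \<le> a \<bullet> x i"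
    and j: "j < n" and g: "h < a \<bullet> x j"
  shows "ELR x n \<theta> \<le> real n ^ Suc n * ((a \<bullet> \<theta> - h) / (a \<bullet> x j - h))"
proof (rule ELR_le_bound[OF \<theta>])
  fix w assume w: "el_weights x n \<theta> w"
  have wn: "0 \<le> w i" if "i < n" for i using w that by (auto simp: el_weights_def)
  have "a \<bullet> \<theta> - h = (\<Sum>i<n. w i * (a \<bullet> x i - h))"
  proof -
    have "a \<bullet> \<theta> = (\<Sum>i<n. w i * (a \<bullet> x i))" "h = (\<Sum>i<n. w i * h)"
      using w by (auto simp: el_weights_def inner_sum_right simp flip: sum_distrib_right)
    then show ?thesis by (simp add: right_diff_distrib sum_subtractf)
  qed
  moreover have "w j * (a \<bullet> x j - h) \<le> (\<Sum>i<n. w i * (a \<bullet> x i - h))"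
    by (rule member_le_sum) (use j wn hx in \<open>auto intro!: mult_nonneg_nonneg\<close>)
  ultimately have wj: "w j \<le> (a \<bullet> \<theta> - h) / (a \<bullet> x j - h)" using g by (simp add: field_simps)
  have "el_prod n w = (real n * w j) * (\<Prod>i\<in>{..<n} - {j}. real n * w i)"
    unfolding el_prod_def using j by (subst prod.remove[of _ j]) auto
  also have "\<dots> \<le> (real n * w j) * real n ^ n"
  proof (rule mult_left_mono)
    show "(\<Prod>i\<in>{..<n} - {j}. real n * w i) \<le> real n ^ n"
    proof (rule prod_le_power)
      fix i assume "i \<in> {..<n} - {j}"
      then show "0 \<le> real n * w i \<and> real n * w i \<le> real n"
        using wn el_weights_le_one[OF w] by (simp add: mult_left_le)
    qed (use j in \<open>auto simp: card_Diff_singleton_if\<close>)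
  qed (use wn j in simp)
  also have "\<dots> = real n ^ Suc n * w j" by (simp add: algebra_simps)
  also have "\<dots> \<le> real n ^ Suc n * ((a \<bullet> \<theta> - h) / (a \<bullet> x j - h))"
    using wj by (intro mult_left_mono) auto
  finally show "el_prod n w \<le> real n ^ Suc n * ((a \<bullet> \<theta> - h) / (a \<bullet> x j - h))" .
qed

lemma supporting_halfspace_frontier:
  assumes n: "0 < n" and ne: "Theta_n x n \<noteq> {}" and b: "b \<in> frontier (convex hull (x ` {..<n}))"
  obtains a j where "\<And>i. i < n \<Longrightarrow> a \<bullet> b \<le> a \<bullet> x i" "a \<bullet> b < a \<bullet> smean x n"
    "j < n" "a \<bullet> b < a \<bullet> x j"
proof -
  define H where "H = convex hull (x ` {..<n})"
  have \<Theta>: "Theta_n x n = interior H" "rel_interior H = interior H"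
    using ne unfolding Theta_n_def H_def by (auto simp: rel_interior_nonempty_interior)
  have "b \<in> H" "b \<notin> interior H"
    using b compact_imp_closed[OF finite_imp_compact_convex_hull[of "x ` {..<n}"]]
    unfolding H_def frontier_def by auto
  moreover have "convex H" by (simp add: H_def)
  ultimately obtain a where aH: "\<And>z. z \<in> H \<Longrightarrow> a \<bullet> b \<le> a \<bullet> z"
      and aI: "\<And>z. z \<in> interior H \<Longrightarrow> a \<bullet> b < a \<bullet> z"
    using supporting_hyperplane_rel_boundary[of H b] \<Theta>(2) by metis
  have hx: "a \<bullet> b \<le> a \<bullet> x i" if "i < n" for i
    by (rule aH) (use that H_def in \<open>auto intro: hull_inc\<close>)
  have hs: "a \<bullet> b < a \<bullet> smean x n" using aI smean_in_Theta_n[OF n ne] \<Theta>(1) by auto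
  have "\<exists>j<n. a \<bullet> b < a \<bullet> x j"
  proof (rule ccontr)
    assume "\<not> (\<exists>j<n. a \<bullet> b < a \<bullet> x j)"
    then have le: "a \<bullet> x i \<le> a \<bullet> b" if "i < n" for i using that by (meson not_le)
    have "a \<bullet> smean x n = (1 / real n) * (\<Sum>i<n. a \<bullet> x i)"
      unfolding smean_def by (simp add: inner_sum_right)
    also have "\<dots> \<le> (1 / real n) * (\<Sum>i<n. a \<bullet> b)" using le by (intro mult_left_mono sum_mono) auto
    also have "\<dots> = a \<bullet> b" using n by simp
    finally show False using hs by simp
  qed
  then show ?thesis using that hx hs by blast
qed

lemma ELR_le_dist_frontier:
  assumes n: "0 < n" and ne: "Theta_n x n \<noteq> {}" and u: "u \<noteq> 0"
  obtains d K where "0 < d" "0 < K"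
    "\<And>t. 0 \<le> t \<Longrightarrow> t < d \<Longrightarrow> smean x n + t *\<^sub>R u \<in> Theta_n x n"
    "\<And>t. 0 \<le> t \<Longrightarrow> t < d \<Longrightarrow> ELR x n (smean x n + t *\<^sub>R u) \<le> K * (d - t)"
proof -
  define s where "s = smean x n"
  have s: "s \<in> interior (convex hull (x ` {..<n}))"
    using smean_in_Theta_n[OF n ne] unfolding s_def Theta_n_def .
  obtain d where d: "0 < d" "s + d *\<^sub>R u \<in> frontier (convex hull (x ` {..<n}))"
      and ray: "\<And>t. 0 \<le> t \<Longrightarrow> t < d \<Longrightarrow> s + t *\<^sub>R u \<in> Theta_n x n"
    using ray_to_frontier[OF finite_imp_bounded_convex_hull s u] unfolding Theta_n_def by blast
  define h where "h a = a \<bullet> (s + d *\<^sub>R u)" for a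
  obtain a j where hx: "\<And>i. i < n \<Longrightarrow> h a \<le> a \<bullet> x i" and hs: "h a < a \<bullet> s"
      and j: "j < n" "h a < a \<bullet> x j"
    using supporting_halfspace_frontier[OF n ne d(2)] unfolding h_def s_def by metis
  have au: "a \<bullet> u < 0"
  proof -
    have "h a = a \<bullet> s + d * (a \<bullet> u)" unfolding h_def by (simp add: inner_add_right)
    then show ?thesis using hs d(1) by (simp add: mult_less_0_iff)
  qed
  define K where "K = real n ^ Suc n * (- (a \<bullet> u)) / (a \<bullet> x j - h a)"
  have "0 < K" unfolding K_def using n au j by (intro divide_pos_pos mult_pos_pos) auto
  moreover have "ELR x n (s + t *\<^sub>R u) \<le> K * (d - t)" if "0 \<le> t" "t < d" for t
  proof -
    have "s + t *\<^sub>R u \<in> convex hull (x ` {..<n})" using ray[OF that] interior_subset Theta_n_def by blast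
    then have "ELR x n (s + t *\<^sub>R u) \<le> real n ^ Suc n * ((a \<bullet> (s + t *\<^sub>R u) - h a) / (a \<bullet> x j - h a))"
      using ELR_le_halfspace hx j by blast
    also have "a \<bullet> (s + t *\<^sub>R u) - h a = (d - t) * (- (a \<bullet> u))"
      unfolding h_def by (simp add: inner_add_right algebra_simps)
    finally show ?thesis unfolding K_def by (simp add: divide_inverse mult_ac)
  qed
  ultimately show ?thesis using that d(1) ray s_def by blast
qed

lemma ray_in_Theta_n_ELL_unbounded:
  assumes n: "0 < n" and ne: "Theta_n x n \<noteq> {}" and u: "u \<noteq> 0"
  obtains d where "0 < d" "\<And>t. 0 \<le> t \<Longrightarrow> t < d \<Longrightarrow> smean x n + t *\<^sub>R u \<in> Theta_n x n"
    "\<And>B. \<exists>t. d / 2 \<le> t \<and> t < d \<and> B \<le> ELL x n (smean x n + t *\<^sub>R u)"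
proof -
  define s where "s = smean x n"
  obtain d K where d: "0 < d" and K: "0 < K" and ray: "\<And>t. 0 \<le> t \<Longrightarrow> t < d \<Longrightarrow> s + t *\<^sub>R u \<in> Theta_n x n"
      and ELR_le: "\<And>t. 0 \<le> t \<Longrightarrow> t < d \<Longrightarrow> ELR x n (s + t *\<^sub>R u) \<le> K * (d - t)"
    using ELR_le_dist_frontier[OF n ne u] unfolding s_def by metis
  have "\<exists>t. d / 2 \<le> t \<and> t < d \<and> B \<le> ELL x n (s + t *\<^sub>R u)" for B
  proof -
    define \<delta> where "\<delta> = min (d / 2) (exp (- B / 2) / K)"
    have "0 < \<delta>" unfolding \<delta>_def using d K by simp
    moreover have "\<delta> \<le> d / 2" "\<delta> \<le> exp (- B / 2) / K"
      unfolding \<delta>_def by (rule min.cobounded1, rule min.cobounded2)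
    ultimately have \<delta>: "0 < \<delta>" "\<delta> \<le> d / 2" "\<delta> \<le> exp (- B / 2) / K" by blast+
    have t: "0 \<le> d - \<delta>" "d - \<delta> < d" using \<delta> by auto
    have "ELR x n (s + (d - \<delta>) *\<^sub>R u) \<le> exp (- B / 2)"
      using ELR_le[OF t] \<delta> K by (simp add: field_simps)
    moreover have "0 < ELR x n (s + (d - \<delta>) *\<^sub>R u)" by (rule ELR_pos[OF n ray[OF t]])
    ultimately have "ln (ELR x n (s + (d - \<delta>) *\<^sub>R u)) \<le> - B / 2"
      by (metis ln_exp ln_le_cancel_iff exp_gt_zero)
    then have "B \<le> ELL x n (s + (d - \<delta>) *\<^sub>R u)" unfolding ELL_def by simp
    then show ?thesis using \<delta> by (intro exI[of _ "d - \<delta>"]) auto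
  qed
  then show ?thesis using that d ray s_def by blast
qed

lemma hC_surj:
  assumes n: "0 < n" and ne: "Theta_n x n \<noteq> {}"
  obtains \<theta> where "\<theta> \<in> Theta_n x n" "hC x n \<theta> = y"
proof (cases "y = smean x n")
  case True
  then show ?thesis using that smean_in_Theta_n[OF n ne] by (simp add: hC_def)
next
  case False
  define s where "s = smean x n"
  define u where "u = y - s"
  have "u \<noteq> 0" using False u_def s_def by simp
  then obtain d where d: "0 < d" and ray: "\<And>t. 0 \<le> t \<Longrightarrow> t < d \<Longrightarrow> s + t *\<^sub>R u \<in> Theta_n x n"
      and big: "\<And>B. \<exists>t. d / 2 \<le> t \<and> t < d \<and> B \<le> ELL x n (s + t *\<^sub>R u)"
    using ray_in_Theta_n_ELL_unbounded[OF n ne] s_def by metis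
  obtain t1 where t1: "d / 2 \<le> t1" "t1 < d" and ELL_t1: "4 * real n / d \<le> ELL x n (s + t1 *\<^sub>R u)"
    using big by blast
  define f where "f t = t * (1 + ELL x n (s + t *\<^sub>R u) / (2 * real n))" for t
  have "1 \<le> f t1"
  proof -
    have "1 + 2 / d \<le> 1 + ELL x n (s + t1 *\<^sub>R u) / (2 * real n)"
      using ELL_t1 n d by (simp add: field_simps)
    then have "(d / 2) * (1 + 2 / d) \<le> f t1"
      unfolding f_def using t1 d by (intro mult_mono) auto
    moreover have "(d / 2) * (1 + 2 / d) = d / 2 + 1" using d by (simp add: field_simps)
    ultimately show ?thesis using d by linarith
  qed
  moreover have "continuous_on {0..t1} f"
  proof -
    have "(\<lambda>t. s + t *\<^sub>R u) ` {0..t1} \<subseteq> Theta_n x n" using ray t1 by auto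
    then have "continuous_on {0..t1} (\<lambda>t. ELL x n (s + t *\<^sub>R u))"
      by (intro continuous_on_compose2[OF continuous_on_ELL[OF n]] continuous_intros) auto
    then show ?thesis unfolding f_def by (intro continuous_intros) (use n in auto)
  qed
  ultimately obtain t where t: "0 \<le> t" "t \<le> t1" "f t = 1"
    using IVT'[of f 0 1 t1] t1 d by (auto simp: f_def)
  have "hC x n (s + t *\<^sub>R u) = s + f t *\<^sub>R u" unfolding hC_def s_def f_def by simp
  then show ?thesis using that[of "s + t *\<^sub>R u"] ray t t1 u_def by simp
qed

lemma hC_inj_on:
  assumes n: "0 < n" and ne: "Theta_n x n \<noteq> {}"
  shows "inj_on (hC x n) (Theta_n x n)"
proof -
  define s where "s = smean x n"
  define c where "c \<theta> = 1 + ELL x n \<theta> / (2 * real n)" for \<theta>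
  have c: "1 \<le> c \<theta>" if "\<theta> \<in> Theta_n x n" for \<theta>
    unfolding c_def using ELL_nonneg[OF n that] n by simp
  have hC: "hC x n \<theta> = s + c \<theta> *\<^sub>R (\<theta> - s)" for \<theta> unfolding hC_def c_def s_def ..
  text \<open>Along a ray from the sample mean, \<open>c\<close> is monotone by convexity of \<open>ELL\<close>; hence two
    preimages of \<open>y\<close>, both on the ray towards \<open>y\<close>, have the same \<open>c\<close>.\<close>
  have le: "c \<theta>1 \<le> c \<theta>2"
    if \<theta>: "\<theta>1 \<in> Theta_n x n" "\<theta>2 \<in> Theta_n x n" and y: "hC x n \<theta>1 = y" "hC x n \<theta>2 = y"
      and ord: "1 / c \<theta>1 \<le> 1 / c \<theta>2" for \<theta>1 \<theta>2 y
  proof -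
    have \<theta>_eq: "\<theta>i = s + (1 / c \<theta>i) *\<^sub>R (y - s)" if "\<theta>i \<in> Theta_n x n" "hC x n \<theta>i = y" for \<theta>i
      using that c[of \<theta>i] unfolding hC by auto
    define l where "l = c \<theta>2 / c \<theta>1"
    have l: "0 \<le> l" "l \<le> 1" unfolding l_def using c[OF \<theta>(1)] c[OF \<theta>(2)] ord
      by (auto simp: field_simps)
    have "l *\<^sub>R (\<theta>2 - s) = (l / c \<theta>2) *\<^sub>R (y - s)"
      by (subst \<theta>_eq[OF \<theta>(2) y(2)]) simp
    also have "l / c \<theta>2 = 1 / c \<theta>1" unfolding l_def using c[OF \<theta>(2)] by simp
    finally have "\<theta>1 = s + l *\<^sub>R (\<theta>2 - s)" using \<theta>_eq[OF \<theta>(1) y(1)] by simp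
    then have "ELL x n \<theta>1 \<le> ELL x n \<theta>2" using ELL_mono_ray[OF n ne \<theta>(2) l] s_def by simp
    then show ?thesis unfolding c_def using n by (simp add: divide_right_mono)
  qed
  show ?thesis
  proof (rule inj_onI)
    fix \<theta>1 \<theta>2 assume \<theta>: "\<theta>1 \<in> Theta_n x n" "\<theta>2 \<in> Theta_n x n" and eq: "hC x n \<theta>1 = hC x n \<theta>2"
    have "c \<theta>1 = c \<theta>2"
    proof (cases "1 / c \<theta>1 \<le> 1 / c \<theta>2")
      case True
      then have "c \<theta>1 \<le> c \<theta>2" using le[OF \<theta> eq refl] by blast
      moreover have "c \<theta>2 \<le> c \<theta>1" using True c[OF \<theta>(1)] c[OF \<theta>(2)] by (simp add: field_simps)
      ultimately show ?thesis by simp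
    next
      case False
      then have "c \<theta>2 \<le> c \<theta>1" using le[OF \<theta>(2) \<theta>(1) eq[symmetric] refl] by linarith
      moreover have "c \<theta>1 \<le> c \<theta>2" using False c[OF \<theta>(1)] c[OF \<theta>(2)] by (simp add: field_simps)
      ultimately show ?thesis by simp
    qed
    then show "\<theta>1 = \<theta>2" using eq c[OF \<theta>(1)] unfolding hC by simp
  qed
qed

lemma hC_inv:
  assumes "0 < n" "Theta_n x n \<noteq> {}"
  shows "hC_inv x n y \<in> Theta_n x n" "hC x n (hC_inv x n y) = y"
proof -
  have "\<exists>!\<theta>. \<theta> \<in> Theta_n x n \<and> hC x n \<theta> = y"
    using hC_surj[OF assms] hC_inj_on[OF assms] by (metis inj_onD)
  then have "hC_inv x n y \<in> Theta_n x n \<and> hC x n (hC_inv x n y) = y"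
    unfolding hC_inv_def by (rule theI')
  then show "hC_inv x n y \<in> Theta_n x n" "hC x n (hC_inv x n y) = y" by auto
qed

lemma hC_inv_scaling:
  assumes "0 < n" "Theta_n x n \<noteq> {}"
  obtains c where "1 \<le> c" "c = 1 + ELL x n (hC_inv x n y) / (2 * real n)"
    "y - smean x n = c *\<^sub>R (hC_inv x n y - smean x n)"
proof -
  have "hC x n (hC_inv x n y) = y" by (rule hC_inv(2)[OF assms])
  then have "y - smean x n = (1 + ELL x n (hC_inv x n y) / (2 * real n)) *\<^sub>R (hC_inv x n y - smean x n)"
    unfolding hC_def by (simp add: algebra_simps)
  moreover have "0 \<le> ELL x n (hC_inv x n y)" by (rule ELL_nonneg[OF assms(1) hC_inv(1)[OF assms]])
  ultimately show ?thesis using that assms(1) by simp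
qed

lemma hC_inv_in_closed_segment:
  assumes "0 < n" "Theta_n x n \<noteq> {}"
  shows "hC_inv x n y \<in> closed_segment (smean x n) y"
proof -
  define s where "s = smean x n"
  obtain c where c: "1 \<le> c" "y - s = c *\<^sub>R (hC_inv x n y - s)"
    using hC_inv_scaling[OF assms] s_def by metis
  have "(1 - 1 / c) *\<^sub>R s + (1 / c) *\<^sub>R y = s + (1 / c) *\<^sub>R (y - s)" by (simp add: algebra_simps)
  also have "\<dots> = hC_inv x n y" using c by simp
  finally have "hC_inv x n y = (1 - 1 / c) *\<^sub>R s + (1 / c) *\<^sub>R y" ..
  moreover have "0 \<le> 1 / c" "1 / c \<le> 1" using c by auto
  ultimately show ?thesis unfolding in_segment s_def by blast
qed

lemma norm_hC_inv_diff:
  assumes "0 < n" "Theta_n x n \<noteq> {}"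
  shows "norm (hC_inv x n y - y)
           = ELL x n (hC_inv x n y) / (2 * real n) * norm (hC_inv x n y - smean x n)"
proof -
  obtain c where c: "c = 1 + ELL x n (hC_inv x n y) / (2 * real n)"
    "y - smean x n = c *\<^sub>R (hC_inv x n y - smean x n)"
    using hC_inv_scaling[OF assms] by metis
  have "hC_inv x n y - y = (hC_inv x n y - smean x n) - (y - smean x n)" by simp
  also have "\<dots> = (- (ELL x n (hC_inv x n y) / (2 * real n))) *\<^sub>R (hC_inv x n y - smean x n)"
    unfolding c(2) c(1) by (simp add: algebra_simps)
  finally show ?thesis
    using ELL_nonneg[OF assms(1) hC_inv(1)[OF assms]] by simp
qed

lemma norm_hC_inv_sub_smean_le:
  assumes "0 < n" "Theta_n x n \<noteq> {}"
  shows "norm (hC_inv x n y - smean x n) \<le> norm (y - smean x n)"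
proof -
  obtain c where c: "1 \<le> c" "y - smean x n = c *\<^sub>R (hC_inv x n y - smean x n)"
    using hC_inv_scaling[OF assms] by metis
  then have "norm (y - smean x n) = c * norm (hC_inv x n y - smean x n)" by simp
  then show ?thesis using c(1) by (simp add: mult_le_cancel_right1)
qed

section \<open>A deterministic bound for the inverse image of the mean\<close>

lemma ln_add_one_ge:
  fixes u :: real
  assumes "\<bar>u\<bar> \<le> 1/2"
  shows "u - 2 * u\<^sup>2 \<le> ln (1 + u)"
proof (cases "0 \<le> u")
  case True
  then have "u - u\<^sup>2 \<le> ln (1 + u)" using assms by (intro ln_one_plus_pos_lower_bound) auto
  then show ?thesis by (smt (verit) zero_le_power2)
next
  case False
  then show ?thesis using ln_one_minus_pos_lower_bound[of "- u"] assms by simp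
qed

lemma ELL_le_sum_squares:
  assumes n: "0 < n" and u: "\<And>i. i < n \<Longrightarrow> \<bar>u i\<bar> \<le> 1/2" and su: "(\<Sum>i<n. u i) = 0"
    and \<theta>: "(\<Sum>i<n. ((1 + u i) / real n) *\<^sub>R x i) = \<theta>"
  shows "ELL x n \<theta> \<le> 4 * (\<Sum>i<n. (u i)\<^sup>2)"
proof -
  define w where "w i = (1 + u i) / real n" for i
  have pos: "0 < w i" if "i < n" for i unfolding w_def using u[OF that] n by auto
  have "sum w {..<n} = (real n + (\<Sum>i<n. u i)) / real n"
    unfolding w_def by (simp add: sum_divide_distrib[symmetric] sum.distrib)
  then have w: "el_weights x n \<theta> w"
    using pos su n \<theta> unfolding el_weights_def w_def by (simp add: less_imp_le)
  have "- 2 * (\<Sum>i<n. (u i)\<^sup>2) = (\<Sum>i<n. u i - 2 * (u i)\<^sup>2)"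
    using su by (simp add: sum_subtractf sum_distrib_left sum_negf)
  also have "\<dots> \<le> (\<Sum>i<n. ln (real n * w i))"
    unfolding w_def using n u ln_add_one_ge by (intro sum_mono) auto
  also have "\<dots> = ln (el_prod n w)" using pos by (simp add: ln_el_prod)
  also have "\<dots> \<le> ln (ELR x n \<theta>)"
    using el_prod_le_ELR[OF w] el_prod_pos_iff[OF w] pos by simp
  finally show ?thesis unfolding ELL_def by simp
qed

text \<open>A bounded transform of the deviation \<open>v - \<theta>0\<close>, used instead of \<open>v - \<theta>0\<close> in the weights
  \<open>(1 + a \<bullet> (damp \<theta>0 (x i) - damp_mean x n \<theta>0)) / n\<close> that represent points near the sample mean:
  boundedness keeps these weights positive and the entries of \<open>dev_matrix\<close> bounded, so that only
  second moments of the sample are needed.\<close>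

definition damp :: "real^'d \<Rightarrow> real^'d \<Rightarrow> real^'d" where
  "damp \<theta>0 v = (1 / (1 + (norm (v - \<theta>0))\<^sup>2)) *\<^sub>R (v - \<theta>0)"

definition damp_mean :: "(nat \<Rightarrow> real^'d) \<Rightarrow> nat \<Rightarrow> real^'d \<Rightarrow> real^'d" where
  "damp_mean x n \<theta>0 = (1 / real n) *\<^sub>R (\<Sum>i<n. damp \<theta>0 (x i))"

definition dev_matrix :: "(nat \<Rightarrow> real^'d) \<Rightarrow> nat \<Rightarrow> real^'d \<Rightarrow> real^'d^'d" where
  "dev_matrix x n \<theta>0 = (\<chi> k j. (1 / real n) * (\<Sum>i<n. (x i - \<theta>0) $ k * damp \<theta>0 (x i) $ j))"

definition dev_map :: "(nat \<Rightarrow> real^'d) \<Rightarrow> nat \<Rightarrow> real^'d \<Rightarrow> real^'d \<Rightarrow> real^'d" where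
  "dev_map x n \<theta>0 a =
     (1 / real n) *\<^sub>R (\<Sum>i<n. (a \<bullet> (damp \<theta>0 (x i) - damp_mean x n \<theta>0)) *\<^sub>R (x i - \<theta>0))"

lemma norm_damp_eq: "norm (damp \<theta>0 v) = norm (v - \<theta>0) / (1 + (norm (v - \<theta>0))\<^sup>2)"
  unfolding damp_def by (simp add: add_pos_nonneg)

lemma norm_damp_le: "norm (damp \<theta>0 v) \<le> 1/2"
proof -
  have "2 * norm (v - \<theta>0) \<le> 1 + (norm (v - \<theta>0))\<^sup>2"
    using zero_le_power2[of "norm (v - \<theta>0) - 1"] by (simp add: power2_eq_square algebra_simps)
  then show ?thesis unfolding norm_damp_eq by (simp add: field_simps add_pos_nonneg)
qed

lemma abs_dev_mult_damp_le: "\<bar>(v - \<theta>0) $ k * damp \<theta>0 v $ j\<bar> \<le> 1"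
proof -
  define r where "r = norm (v - \<theta>0)"
  have "\<bar>(v - \<theta>0) $ k * damp \<theta>0 v $ j\<bar> \<le> r * norm (damp \<theta>0 v)"
    unfolding abs_mult r_def by (intro mult_mono component_le_norm_cart) auto
  also have "\<dots> = r\<^sup>2 / (1 + r\<^sup>2)" unfolding norm_damp_eq r_def by (simp add: power2_eq_square)
  also have "\<dots> \<le> 1" by (simp add: add_pos_nonneg)
  finally show ?thesis .
qed

lemma norm_damp_mean_le:
  assumes "0 < n"
  shows "norm (damp_mean x n \<theta>0) \<le> 1/2"
proof -
  have "norm (\<Sum>i<n. damp \<theta>0 (x i)) \<le> (\<Sum>i<n. norm (damp \<theta>0 (x i)))" by (rule norm_sum)
  also have "\<dots> \<le> (\<Sum>i<n. 1/2)" by (intro sum_mono norm_damp_le)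
  finally show ?thesis unfolding damp_mean_def using assms by (simp add: field_simps)
qed

lemma linear_dev_map: "linear (dev_map x n \<theta>0)"
proof (rule linearI)
  fix a b and r :: real
  show "dev_map x n \<theta>0 (a + b) = dev_map x n \<theta>0 a + dev_map x n \<theta>0 b"
    unfolding dev_map_def by (simp add: inner_add_left scaleR_add_left sum.distrib scaleR_add_right)
  show "dev_map x n \<theta>0 (r *\<^sub>R a) = r *\<^sub>R dev_map x n \<theta>0 a"
    unfolding dev_map_def by (simp add: scaleR_sum_right)
qed

lemma dev_map_eq:
  assumes n: "0 < n"
  shows "dev_map x n \<theta>0 a = dev_matrix x n \<theta>0 *v a - (a \<bullet> damp_mean x n \<theta>0) *\<^sub>R (smean x n - \<theta>0)"
  unfolding vec_eq_iff
proof
  fix k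
  define Y where "Y i = x i - \<theta>0" for i
  define Z where "Z i = damp \<theta>0 (x i)" for i
  have "dev_map x n \<theta>0 a $ k
      = (1 / real n) * (\<Sum>i<n. (a \<bullet> Z i - a \<bullet> damp_mean x n \<theta>0) * Y i $ k)"
    unfolding dev_map_def Y_def Z_def by (simp add: inner_diff_right sum_component)
  also have "\<dots> = (1 / real n) * (\<Sum>i<n. (a \<bullet> Z i) * Y i $ k)
      - (a \<bullet> damp_mean x n \<theta>0) * ((1 / real n) * (\<Sum>i<n. Y i $ k))"
    by (simp add: left_diff_distrib sum_subtractf sum_distrib_left right_diff_distrib mult.assoc
        mult.left_commute)
  also have "(1 / real n) * (\<Sum>i<n. Y i $ k) = (smean x n - \<theta>0) $ k"
    using n unfolding Y_def smean_def by (simp add: sum_component sum_subtractf right_diff_distrib)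
  also have "(1 / real n) * (\<Sum>i<n. (a \<bullet> Z i) * Y i $ k) = (dev_matrix x n \<theta>0 *v a) $ k"
  proof -
    have "(\<Sum>i<n. (a \<bullet> Z i) * Y i $ k) = (\<Sum>i<n. \<Sum>j\<in>UNIV. a $ j * (Y i $ k * Z i $ j))"
      unfolding inner_vec_def by (intro sum.cong refl) (simp add: sum_distrib_left sum_distrib_right mult_ac)
    also have "\<dots> = (\<Sum>j\<in>UNIV. a $ j * (\<Sum>i<n. Y i $ k * Z i $ j))"
      by (simp add: sum.swap[of _ "{..<n}"] sum_distrib_left)
    finally show ?thesis
      unfolding dev_matrix_def matrix_vector_mult_def Y_def Z_def by (simp add: sum_distrib_left mult_ac)
  qed
  finally show "dev_map x n \<theta>0 a $ k
      = (dev_matrix x n \<theta>0 *v a - (a \<bullet> damp_mean x n \<theta>0) *\<^sub>R (smean x n - \<theta>0)) $ k"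
    by simp
qed

lemma linear_surj_near_bounded_below:
  fixes f g :: "'a::euclidean_space \<Rightarrow> 'a"
  assumes f: "linear f" and c: "0 < c" and g: "\<And>a. c * norm a \<le> norm (g a)"
    and near: "\<And>a. norm (f a - g a) \<le> c / 2 * norm a"
  obtains a where "f a = y" "norm a \<le> 2 * norm y / c"
proof -
  have lower: "c / 2 * norm a \<le> norm (f a)" for a
    using g[of a] near[of a] norm_triangle_ineq2[of "g a" "f a"] by (simp add: norm_minus_commute)
  have "inj f"
  proof (rule linear_injective_0[THEN iffD2, OF f], intro allI impI)
    fix a assume "f a = 0"
    then show "a = 0" using lower[of a] c by (simp add: mult_le_0_iff)
  qed
  then obtain a where a: "f a = y" using linear_inj_imp_surj[OF f] by (metis surjD)
  moreover have "norm a \<le> 2 * norm y / c" using lower[of a] a c by (simp add: field_simps)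
  ultimately show ?thesis by (rule that)
qed

lemma ELL_le_dev_map:
  assumes n: "0 < n" and a: "norm a \<le> 1/2" and \<theta>: "\<theta> - smean x n = dev_map x n \<theta>0 a"
  shows "ELL x n \<theta> \<le> 4 * real n * (norm a)\<^sup>2"
proof -
  define u where "u i = a \<bullet> (damp \<theta>0 (x i) - damp_mean x n \<theta>0)" for i
  have u: "\<bar>u i\<bar> \<le> norm a" for i
  proof -
    have "norm (damp \<theta>0 (x i) - damp_mean x n \<theta>0) \<le> norm (damp \<theta>0 (x i)) + norm (damp_mean x n \<theta>0)"
      by (rule norm_triangle_ineq4)
    also have "\<dots> \<le> 1" using norm_damp_le[of \<theta>0 "x i"] norm_damp_mean_le[OF n, of x \<theta>0] by linarith
    finally have "norm a * norm (damp \<theta>0 (x i) - damp_mean x n \<theta>0) \<le> norm a"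
      using mult_left_mono[of _ 1 "norm a"] by simp
    then show ?thesis unfolding u_def using Cauchy_Schwarz_ineq2 order_trans by blast
  qed
  have su: "(\<Sum>i<n. u i) = 0"
    using n unfolding u_def damp_mean_def by (simp add: inner_diff_right sum_subtractf inner_sum_right)
  have "(\<Sum>i<n. ((1 + u i) / real n) *\<^sub>R x i) = smean x n + (1 / real n) *\<^sub>R (\<Sum>i<n. u i *\<^sub>R x i)"
    unfolding smean_def by (simp add: scaleR_sum_right scaleR_add_left sum.distrib add_divide_distrib)
  also have "(\<Sum>i<n. u i *\<^sub>R x i) = (\<Sum>i<n. u i *\<^sub>R (x i - \<theta>0))"
    using su by (simp add: scaleR_diff_right sum_subtractf flip: scaleR_sum_left)
  also have "smean x n + (1 / real n) *\<^sub>R \<dots> = \<theta>"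
    using \<theta> unfolding dev_map_def u_def by (simp add: algebra_simps)
  finally have \<theta>_weights: "(\<Sum>i<n. ((1 + u i) / real n) *\<^sub>R x i) = \<theta>" .
  have "\<bar>u i\<bar> \<le> 1/2" for i using u[of i] a by linarith
  then have "ELL x n \<theta> \<le> 4 * (\<Sum>i<n. (u i)\<^sup>2)" using ELL_le_sum_squares[OF n _ su \<theta>_weights] by blast
  also have "\<dots> \<le> 4 * (\<Sum>i<n. (norm a)\<^sup>2)"
  proof -
    have "(u i)\<^sup>2 \<le> (norm a)\<^sup>2" for i using power_mono[OF u[of i] abs_ge_zero, of 2] by simp
    then show ?thesis by (intro mult_left_mono sum_mono) auto
  qed
  finally show ?thesis by simp
qed

lemma norm_dev_map_sub_le:
  fixes A :: "real^'d^'d"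
  assumes n: "0 < n" and dev_matrix: "\<And>k j. \<bar>dev_matrix x n \<theta>0 $ k $ j - A $ k $ j\<bar> \<le> \<eta>"
  shows "norm (dev_map x n \<theta>0 a - A *v a)
           \<le> (real CARD('d) ^ 2 * \<eta> + norm (smean x n - \<theta>0) / 2) * norm a"
proof -
  have "onorm ((*v) (dev_matrix x n \<theta>0 - A)) \<le> real CARD('d) * real CARD('d) * \<eta>"
    by (rule onorm_le_matrix_component) (simp add: dev_matrix)
  then have B: "norm ((dev_matrix x n \<theta>0 - A) *v a) \<le> real CARD('d) ^ 2 * \<eta> * norm a"
    using onorm[OF matrix_vector_mul_bounded_linear, of "dev_matrix x n \<theta>0 - A" a]
    by (simp add: power2_eq_square) (meson mult_right_mono norm_ge_zero order_trans)
  have "norm ((a \<bullet> damp_mean x n \<theta>0) *\<^sub>R (smean x n - \<theta>0))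
      = \<bar>a \<bullet> damp_mean x n \<theta>0\<bar> * norm (smean x n - \<theta>0)"
    by simp
  also have "\<dots> \<le> (norm a * (1/2)) * norm (smean x n - \<theta>0)"
    by (rule mult_right_mono[OF order_trans[OF Cauchy_Schwarz_ineq2
          mult_left_mono[OF norm_damp_mean_le[OF n] norm_ge_zero]] norm_ge_zero])
  finally have Z: "norm ((a \<bullet> damp_mean x n \<theta>0) *\<^sub>R (smean x n - \<theta>0))
      \<le> norm (smean x n - \<theta>0) / 2 * norm a" by (simp add: mult.commute)
  have "dev_map x n \<theta>0 a - A *v a
      = (dev_matrix x n \<theta>0 - A) *v a - (a \<bullet> damp_mean x n \<theta>0) *\<^sub>R (smean x n - \<theta>0)"
    unfolding dev_map_eq[OF n] by (simp add: matrix_vector_mult_diff_rdistrib)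
  then have "norm (dev_map x n \<theta>0 a - A *v a) \<le> norm ((dev_matrix x n \<theta>0 - A) *v a)
      + norm ((a \<bullet> damp_mean x n \<theta>0) *\<^sub>R (smean x n - \<theta>0))"
    by (simp only: norm_triangle_ineq4)
  then show ?thesis using B Z by (simp add: distrib_right)
qed

lemma hC_inv_dist_le:
  fixes A :: "real^'d^'d"
  assumes n: "0 < n" and ne: "Theta_n x n \<noteq> {}"
    and c: "0 < c" and A: "\<And>a. c * norm a \<le> norm (A *v a)"
    and dev_matrix: "\<And>k j. \<bar>dev_matrix x n \<theta>0 $ k $ j - A $ k $ j\<bar> \<le> \<eta>"
    and \<eta>: "real CARD('d) ^ 2 * \<eta> \<le> c / 4"
    and r: "norm (smean x n - \<theta>0) \<le> r" "r \<le> c / 4"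
  shows "norm (hC_inv x n \<theta>0 - \<theta>0) \<le> 8 * r ^ 3 / c\<^sup>2"
proof -
  define \<theta> where "\<theta> = hC_inv x n \<theta>0"
  define s where "s = smean x n"
  have \<theta>s: "norm (\<theta> - s) \<le> r"
    using norm_hC_inv_sub_smean_le[OF n ne, of \<theta>0] r(1) unfolding \<theta>_def s_def
    by (simp add: norm_minus_commute)
  have near: "norm (dev_map x n \<theta>0 a - A *v a) \<le> c / 2 * norm a" for a
  proof -
    have "real CARD('d) ^ 2 * \<eta> + norm (smean x n - \<theta>0) / 2 \<le> c / 2" using \<eta> r c by linarith
    then show ?thesis using norm_dev_map_sub_le[OF n dev_matrix, of a]
      by (meson mult_right_mono norm_ge_zero order_trans)
  qed
  obtain a where a: "dev_map x n \<theta>0 a = \<theta> - s" "norm a \<le> 2 * norm (\<theta> - s) / c"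
    using linear_surj_near_bounded_below[OF linear_dev_map c A near] by blast
  have a_le: "norm a \<le> 2 * r / c" using a(2) \<theta>s c by (simp add: field_simps)
  have "ELL x n \<theta> \<le> 4 * real n * (norm a)\<^sup>2"
  proof (rule ELL_le_dev_map[OF n])
    have "2 * r / c \<le> 1/2" using r(2) c by (simp add: field_simps)
    then show "norm a \<le> 1/2" using a_le by linarith
    show "\<theta> - smean x n = dev_map x n \<theta>0 a" using a(1) s_def by simp
  qed
  also have "\<dots> \<le> 4 * real n * (2 * r / c)\<^sup>2"
    using a_le by (intro mult_left_mono power_mono) auto
  finally have ELL: "ELL x n \<theta> / (2 * real n) \<le> (4 * real n * (2 * r / c)\<^sup>2) / (2 * real n)"
    using n by (intro divide_right_mono) auto
  have "norm (\<theta> - \<theta>0) = ELL x n \<theta> / (2 * real n) * norm (\<theta> - s)"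
    using norm_hC_inv_diff[OF n ne, of \<theta>0] unfolding \<theta>_def s_def .
  also have "\<dots> \<le> (4 * real n * (2 * r / c)\<^sup>2) / (2 * real n) * r"
    using ELL \<theta>s ELL_nonneg[OF n hC_inv(1)[OF n ne]] n unfolding \<theta>_def by (intro mult_mono) auto
  also have "\<dots> = 8 * r ^ 3 / c\<^sup>2" using n c by (simp add: field_simps power2_eq_square power3_eq_cube)
  finally show ?thesis unfolding \<theta>_def .
qed

lemma cube_div_sqrt:
  assumes "0 < n"
  shows "(D / sqrt (real n)) ^ 3 = D ^ 3 * real n powr (-3/2)"
proof -
  have "real n powr (3/2) = real n powr (1 + 1/2)" by simp
  also have "\<dots> = real n powr 1 * real n powr (1/2)" by (rule powr_add)
  also have "\<dots> = real n * sqrt (real n)" using assms by (simp add: powr_half_sqrt)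
  also have "\<dots> = (sqrt (real n)) ^ 3" unfolding power3_eq_cube by simp
  finally have n32: "(sqrt (real n)) ^ 3 = real n powr (3/2)" ..
  have "(D / sqrt (real n)) ^ 3 = D ^ 3 / real n powr (3/2)" unfolding power_divide n32 ..
  also have "\<dots> = D ^ 3 * real n powr (- (3/2))" unfolding powr_minus by (simp add: field_simps)
  finally show ?thesis by simp
qed

lemma hC_inv_dist_le_powr:
  fixes A :: "real^'d^'d"
  assumes n: "0 < n" and ne: "Theta_n x n \<noteq> {}"
    and c: "0 < c" and A: "\<And>a. c * norm a \<le> norm (A *v a)"
    and dev_matrix: "\<And>k j. \<bar>dev_matrix x n \<theta>0 $ k $ j - A $ k $ j\<bar> < c / (4 * real CARD('d) ^ 2)"
    and mean: "\<And>k. \<bar>(smean x n - \<theta>0) $ k\<bar> < D / (real CARD('d) * sqrt (real n))"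
    and large: "(4 * real CARD('d) * D / c)\<^sup>2 \<le> real n"
  shows "norm (hC_inv x n \<theta>0 - \<theta>0) \<le> 8 * D ^ 3 / c\<^sup>2 * real n powr (-3/2)"
proof -
  define d where "d = real CARD('d)"
  define r where "r = D / sqrt (real n)"
  have d: "1 \<le> d" unfolding d_def by simp
  have "norm (smean x n - \<theta>0) \<le> (\<Sum>k\<in>UNIV. \<bar>(smean x n - \<theta>0) $ k\<bar>)" by (rule norm_le_l1_cart)
  also have "\<dots> \<le> (\<Sum>k\<in>(UNIV::'d set). r / d)"
    using mean by (intro sum_mono less_imp_le) (simp add: r_def d_def mult.commute)
  also have "\<dots> = r" using d by (simp add: d_def)
  finally have mean_r: "norm (smean x n - \<theta>0) \<le> r" .
  have sqrt_n: "0 < sqrt (real n)" using n by simp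
  have "0 < D / (d * sqrt (real n))"
    using mean[of undefined] abs_ge_zero unfolding d_def by (rule le_less_trans[rotated])
  moreover have "0 < d * sqrt (real n)" using d sqrt_n by simp
  ultimately have D: "0 < D" by (simp add: zero_less_divide_iff)
  have "4 * d * D / c \<le> sqrt (real n)" using real_sqrt_le_mono[OF large] c d D by (simp add: d_def)
  then have "4 * (d * D) \<le> c * sqrt (real n)" using c by (simp add: pos_divide_le_eq mult.commute mult.left_commute)
  then have "d * r \<le> c / 4" unfolding r_def using sqrt_n by (simp add: pos_divide_le_eq)
  moreover have "r \<le> d * r" using mult_right_mono[OF d, of r] D sqrt_n unfolding r_def by simp
  ultimately have "r \<le> c / 4" by linarith
  moreover have "real CARD('d) ^ 2 * (c / (4 * real CARD('d) ^ 2)) \<le> c / 4" by simp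
  ultimately have "norm (hC_inv x n \<theta>0 - \<theta>0) \<le> 8 * r ^ 3 / c\<^sup>2"
    using hC_inv_dist_le[OF n ne c A _ _ mean_r] dev_matrix less_imp_le by blast
  also have "\<dots> = 8 * D ^ 3 / c\<^sup>2 * real n powr (-3/2)" unfolding r_def cube_div_sqrt[OF n] by simp
  finally show ?thesis .
qed

section \<open>Probabilistic estimates\<close>

lemma (in prob_space) indep_vars_imp_indep_var:
  fixes V :: "'i \<Rightarrow> 'a \<Rightarrow> real"
  assumes "indep_vars (\<lambda>_. borel) V I" "i \<in> I" "j \<in> I" "i \<noteq> j"
  shows "indep_var borel (V i) borel (V j)"
proof -
  have "indep_vars (\<lambda>_. borel) V (insert i {j})" by (rule indep_vars_subset[OF assms(1)]) (use assms in auto)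
  then have "indep_var borel (V i) borel (\<lambda>\<omega>. \<Sum>i\<in>{j}. V i \<omega>)"
    using indep_vars_sum[of "{j}" i V] assms(4) by auto
  then show ?thesis by simp
qed

lemma (in prob_space) expectation_square_sum_indep:
  fixes V :: "'i \<Rightarrow> 'a \<Rightarrow> real"
  assumes [measurable]: "\<And>i. V i \<in> borel_measurable M"
    and indep: "indep_vars (\<lambda>_. borel) V I"
    and sq: "\<And>i. i \<in> I \<Longrightarrow> integrable M (\<lambda>\<omega>. (V i \<omega>)\<^sup>2)"
    and centered: "\<And>i. i \<in> I \<Longrightarrow> expectation (V i) = 0"
    and J: "finite J" "J \<subseteq> I"
  shows "integrable M (\<lambda>\<omega>. (\<Sum>i\<in>J. V i \<omega>)\<^sup>2)"
    and "expectation (\<lambda>\<omega>. (\<Sum>i\<in>J. V i \<omega>)\<^sup>2) = (\<Sum>i\<in>J. expectation (\<lambda>\<omega>. (V i \<omega>)\<^sup>2))"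
proof -
  have int: "integrable M (V i)" if "i \<in> I" for i
    using square_integrable_imp_integrable[OF _ sq[OF that]] by simp
  have prod: "integrable M (\<lambda>\<omega>. V i \<omega> * V j \<omega>) \<and>
      expectation (\<lambda>\<omega>. V i \<omega> * V j \<omega>) = (if i = j then expectation (\<lambda>\<omega>. (V i \<omega>)\<^sup>2) else 0)"
    if "i \<in> I" "j \<in> I" for i j
  proof (cases "i = j")
    case True
    then show ?thesis using sq[OF that(1)] by (simp add: power2_eq_square)
  next
    case False
    then have ind: "indep_var borel (V i) borel (V j)" using indep_vars_imp_indep_var[OF indep that] by simp
    show ?thesis
      using indep_var_lebesgue_integral[OF ind int int] indep_var_integrable[OF ind int int]
        that centered False by simp
  qed
  have int_ij: "integrable M (\<lambda>\<omega>. V i \<omega> * V j \<omega>)" if "i \<in> J" "j \<in> J" for i j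
    using prod that J by blast
  have sq_sum: "(\<Sum>i\<in>J. V i \<omega>)\<^sup>2 = (\<Sum>i\<in>J. \<Sum>j\<in>J. V i \<omega> * V j \<omega>)" for \<omega>
    unfolding power2_eq_square by (simp add: sum_product)
  show "integrable M (\<lambda>\<omega>. (\<Sum>i\<in>J. V i \<omega>)\<^sup>2)"
    unfolding sq_sum by (intro Bochner_Integration.integrable_sum int_ij)
  have "expectation (\<lambda>\<omega>. (\<Sum>i\<in>J. V i \<omega>)\<^sup>2) = (\<Sum>i\<in>J. expectation (\<lambda>\<omega>. \<Sum>j\<in>J. V i \<omega> * V j \<omega>))"
    unfolding sq_sum by (intro Bochner_Integration.integral_sum Bochner_Integration.integrable_sum int_ij)
  also have "\<dots> = (\<Sum>i\<in>J. \<Sum>j\<in>J. expectation (\<lambda>\<omega>. V i \<omega> * V j \<omega>))"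
    by (intro sum.cong refl Bochner_Integration.integral_sum int_ij)
  also have "\<dots> = (\<Sum>i\<in>J. \<Sum>j\<in>J. if i = j then expectation (\<lambda>\<omega>. (V i \<omega>)\<^sup>2) else 0)"
    using prod J by (intro sum.cong refl) blast
  also have "\<dots> = (\<Sum>i\<in>J. expectation (\<lambda>\<omega>. (V i \<omega>)\<^sup>2))" using J(1) by simp
  finally show "expectation (\<lambda>\<omega>. (\<Sum>i\<in>J. V i \<omega>)\<^sup>2) = (\<Sum>i\<in>J. expectation (\<lambda>\<omega>. (V i \<omega>)\<^sup>2))" .
qed

lemma (in prob_space) prob_sample_mean_deviation_ge:
  fixes X :: "'a \<Rightarrow> 'b::topological_space" and Xs :: "nat \<Rightarrow> 'a \<Rightarrow> 'b" and f :: "'b \<Rightarrow> real"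
  assumes [measurable]: "X \<in> borel_measurable M" "\<And>i. Xs i \<in> borel_measurable M"
    and indep: "indep_vars (\<lambda>_. borel) Xs UNIV"
    and distr: "\<And>i. distr M borel (Xs i) = distr M borel X"
    and [measurable]: "f \<in> borel_measurable borel"
    and sq: "integrable M (\<lambda>\<omega>. (f (X \<omega>))\<^sup>2)"
    and t: "0 < t" and n: "0 < n"
  shows "prob {\<omega> \<in> space M. t \<le> \<bar>(1 / real n) * (\<Sum>i<n. f (Xs i \<omega>)) - expectation (\<lambda>\<omega>. f (X \<omega>))\<bar>}
           \<le> variance (\<lambda>\<omega>. f (X \<omega>)) / (real n * t\<^sup>2)"
proof -
  define \<mu> where "\<mu> = expectation (\<lambda>\<omega>. f (X \<omega>))"
  define V where "V i \<omega> = f (Xs i \<omega>) - \<mu>" for i \<omega>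
  have [measurable]: "V i \<in> borel_measurable M" for i unfolding V_def by measurable
  have same_distr: "expectation (\<lambda>\<omega>. g (Xs i \<omega>)) = expectation (\<lambda>\<omega>. g (X \<omega>))
      \<and> (integrable M (\<lambda>\<omega>. g (Xs i \<omega>)) \<longleftrightarrow> integrable M (\<lambda>\<omega>. g (X \<omega>)))"
    if [measurable]: "g \<in> borel_measurable borel" for g :: "'b \<Rightarrow> real" and i
    using integral_distr[of "Xs i" M borel g] integral_distr[of X M borel g]
      integrable_distr_eq[of "Xs i" M borel g] integrable_distr_eq[of X M borel g] distr[of i]
    by simp
  have int_f: "integrable M (\<lambda>\<omega>. f (X \<omega>))" using square_integrable_imp_integrable[OF _ sq] by simp
  have sq_centered: "integrable M (\<lambda>\<omega>. (f (X \<omega>) - \<mu>)\<^sup>2)" using sq int_f by (simp add: power2_diff)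
  have V_sq: "integrable M (\<lambda>\<omega>. (V i \<omega>)\<^sup>2)" "expectation (\<lambda>\<omega>. (V i \<omega>)\<^sup>2) = variance (\<lambda>\<omega>. f (X \<omega>))" for i
    using same_distr[of "\<lambda>v. (f v - \<mu>)\<^sup>2" i] sq_centered unfolding V_def \<mu>_def by auto
  have V_mean: "expectation (V i) = 0" for i
    using same_distr[of "\<lambda>v. f v - \<mu>" i] int_f prob_space unfolding V_def \<mu>_def by simp
  have indep_V: "indep_vars (\<lambda>_. borel) V UNIV"
    unfolding V_def using indep_vars_compose2[OF indep, of "\<lambda>i v. f v - \<mu>" "\<lambda>_. borel"] by simp
  define S where "S \<omega> = (\<Sum>i<n. V i \<omega>)" for \<omega>
  have S_sq: "integrable M (\<lambda>\<omega>. (S \<omega>)\<^sup>2)" "expectation (\<lambda>\<omega>. (S \<omega>)\<^sup>2) = real n * variance (\<lambda>\<omega>. f (X \<omega>))"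
    using expectation_square_sum_indep[of V UNIV "{..<n}", OF _ indep_V V_sq(1) V_mean] V_sq(2)
    unfolding S_def by auto
  have "t \<le> \<bar>(1 / real n) * (\<Sum>i<n. f (Xs i \<omega>)) - \<mu>\<bar> \<longleftrightarrow> (real n * t)\<^sup>2 \<le> (S \<omega>)\<^sup>2" for \<omega>
  proof -
    have "(1 / real n) * (\<Sum>i<n. f (Xs i \<omega>)) - \<mu> = S \<omega> / real n"
      unfolding S_def V_def using n by (simp add: sum_subtractf field_simps)
    then have "t \<le> \<bar>(1 / real n) * (\<Sum>i<n. f (Xs i \<omega>)) - \<mu>\<bar> \<longleftrightarrow> real n * t \<le> \<bar>S \<omega>\<bar>"
      using n by (simp add: field_simps)
    also have "\<dots> \<longleftrightarrow> (real n * t)\<^sup>2 \<le> \<bar>S \<omega>\<bar>\<^sup>2"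
      using power_mono_iff[of "real n * t" "\<bar>S \<omega>\<bar>" 2] n t by simp
    finally show ?thesis by simp
  qed
  then have "prob {\<omega> \<in> space M. t \<le> \<bar>(1 / real n) * (\<Sum>i<n. f (Xs i \<omega>)) - \<mu>\<bar>}
      = prob {\<omega> \<in> space M. (real n * t)\<^sup>2 \<le> (S \<omega>)\<^sup>2}" by simp
  also have "\<dots> \<le> expectation (\<lambda>\<omega>. (S \<omega>)\<^sup>2) / (real n * t)\<^sup>2"
    by (rule integral_Markov_inequality_measure[OF S_sq(1)]) (use n t in auto)
  also have "\<dots> = variance (\<lambda>\<omega>. f (X \<omega>)) / (real n * t\<^sup>2)"
    unfolding S_sq(2) using n t by (simp add: power2_eq_square field_simps)
  finally show ?thesis unfolding \<mu>_def .
qed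

lemma (in prob_space) prob_sample_means_close:
  fixes X :: "'a \<Rightarrow> 'b::topological_space" and Xs :: "nat \<Rightarrow> 'a \<Rightarrow> 'b"
    and f :: "'j \<Rightarrow> 'b \<Rightarrow> real" and t :: "'j \<Rightarrow> real"
  assumes [measurable]: "X \<in> borel_measurable M" "\<And>i. Xs i \<in> borel_measurable M"
    and indep: "indep_vars (\<lambda>_. borel) Xs UNIV"
    and distr: "\<And>i. distr M borel (Xs i) = distr M borel X"
    and J: "finite J" and f: "\<And>j. j \<in> J \<Longrightarrow> f j \<in> borel_measurable borel"
    and sq: "\<And>j. j \<in> J \<Longrightarrow> integrable M (\<lambda>\<omega>. (f j (X \<omega>))\<^sup>2)"
    and t: "\<And>j. j \<in> J \<Longrightarrow> 0 < t j" and n: "0 < n"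
  defines "G \<equiv> {\<omega> \<in> space M. \<forall>j\<in>J.
             \<bar>(1 / real n) * (\<Sum>i<n. f j (Xs i \<omega>)) - expectation (\<lambda>\<omega>. f j (X \<omega>))\<bar> < t j}"
  shows "G \<in> events"
    and "1 - (\<Sum>j\<in>J. variance (\<lambda>\<omega>. f j (X \<omega>)) / (real n * (t j)\<^sup>2)) \<le> prob G"
proof -
  define B where "B j = {\<omega> \<in> space M.
      t j \<le> \<bar>(1 / real n) * (\<Sum>i<n. f j (Xs i \<omega>)) - expectation (\<lambda>\<omega>. f j (X \<omega>))\<bar>}" for j
  have B: "B j \<in> events" if "j \<in> J" for j
    using f[OF that] unfolding B_def by measurable
  have G: "G = space M - (\<Union>j\<in>J. B j)" unfolding G_def B_def by (auto simp: not_le)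
  then show "G \<in> events" using B J by auto
  have "prob (\<Union>j\<in>J. B j) \<le> (\<Sum>j\<in>J. prob (B j))" by (rule measure_UNION_le[OF J B])
  also have "\<dots> \<le> (\<Sum>j\<in>J. variance (\<lambda>\<omega>. f j (X \<omega>)) / (real n * (t j)\<^sup>2))"
    unfolding B_def using f sq t n
    by (intro sum_mono prob_sample_mean_deviation_ge[OF _ _ indep distr]) auto
  moreover have "prob G = 1 - prob (\<Union>j\<in>J. B j)"
    unfolding G using B J by (intro prob_compl) auto
  ultimately show "1 - (\<Sum>j\<in>J. variance (\<lambda>\<omega>. f j (X \<omega>)) / (real n * (t j)\<^sup>2)) \<le> prob G"
    by linarith
qed

definition damp_moment :: "'a measure \<Rightarrow> ('a \<Rightarrow> real^'d) \<Rightarrow> real^'d \<Rightarrow> real^'d^'d" where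
  "damp_moment M X \<theta>0 = (\<chi> k j. integral\<^sup>L M (\<lambda>\<omega>. (X \<omega> - \<theta>0) $ k * damp \<theta>0 (X \<omega>) $ j))"

lemma borel_measurable_damp[measurable]: "damp \<theta>0 \<in> borel_measurable borel"
  unfolding damp_def by measurable

lemma borel_measurable_vec_nth[measurable]:
  "f \<in> borel_measurable M \<Longrightarrow> (\<lambda>x. (f x :: real^'n) $ i) \<in> borel_measurable M"
  by (rule measurable_compose[OF _ borel_measurable_nth])

lemma (in prob_space) integrable_dev_mult_damp:
  assumes [measurable]: "X \<in> borel_measurable M"
  shows "integrable M (\<lambda>\<omega>. ((X \<omega> - \<theta>0) $ k * damp \<theta>0 (X \<omega>) $ j) ^ p)"
proof (rule integrable_const_bound[where B = 1])
  show "AE \<omega> in M. norm (((X \<omega> - \<theta>0) $ k * damp \<theta>0 (X \<omega>) $ j) ^ p) \<le> 1"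
  proof (rule AE_I2)
    fix \<omega>
    show "norm (((X \<omega> - \<theta>0) $ k * damp \<theta>0 (X \<omega>) $ j) ^ p) \<le> 1"
      unfolding real_norm_def power_abs by (intro power_le_one abs_ge_zero abs_dev_mult_damp_le)
  qed
qed measurable

lemma (in prob_space) integrable_dev_mult_dev:
  fixes X :: "'a \<Rightarrow> real^'d"
  assumes [measurable]: "X \<in> borel_measurable M" and sq: "integrable M (\<lambda>\<omega>. (norm (X \<omega>))\<^sup>2)"
  shows "integrable M (\<lambda>\<omega>. (X \<omega> $ i - \<theta>0 $ i) * (X \<omega> $ j - \<theta>0 $ j))"
proof (rule Bochner_Integration.integrable_bound)
  show "integrable M (\<lambda>\<omega>. 2 * (norm (X \<omega>))\<^sup>2 + 2 * (norm \<theta>0)\<^sup>2)" using sq by simp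
  show "AE \<omega> in M. norm ((X \<omega> $ i - \<theta>0 $ i) * (X \<omega> $ j - \<theta>0 $ j))
      \<le> norm (2 * (norm (X \<omega>))\<^sup>2 + 2 * (norm \<theta>0)\<^sup>2)"
  proof (rule AE_I2)
    fix \<omega>
    have "norm ((X \<omega> $ i - \<theta>0 $ i) * (X \<omega> $ j - \<theta>0 $ j)) \<le> norm (X \<omega> - \<theta>0) * norm (X \<omega> - \<theta>0)"
      using component_le_norm_cart[of "X \<omega> - \<theta>0"] unfolding real_norm_def abs_mult
      by (intro mult_mono) auto
    also have "\<dots> \<le> (norm (X \<omega>) + norm \<theta>0) * (norm (X \<omega>) + norm \<theta>0)"
      using norm_triangle_ineq4[of "X \<omega>" \<theta>0] by (intro mult_mono) auto
    also have "\<dots> \<le> 2 * (norm (X \<omega>))\<^sup>2 + 2 * (norm \<theta>0)\<^sup>2"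
      using zero_le_power2[of "norm (X \<omega>) - norm \<theta>0"] by (simp add: power2_eq_square algebra_simps)
    finally show "norm ((X \<omega> $ i - \<theta>0 $ i) * (X \<omega> $ j - \<theta>0 $ j))
        \<le> norm (2 * (norm (X \<omega>))\<^sup>2 + 2 * (norm \<theta>0)\<^sup>2)" by simp
  qed
qed measurable

lemma (in prob_space) inner_damp_moment:
  fixes X :: "'a \<Rightarrow> real^'d"
  assumes [measurable]: "X \<in> borel_measurable M"
  shows "integrable M (\<lambda>\<omega>. (a \<bullet> (X \<omega> - \<theta>0))\<^sup>2 / (1 + (norm (X \<omega> - \<theta>0))\<^sup>2))" (is "integrable M ?g")
    and "a \<bullet> (damp_moment M X \<theta>0 *v a)
           = expectation (\<lambda>\<omega>. (a \<bullet> (X \<omega> - \<theta>0))\<^sup>2 / (1 + (norm (X \<omega> - \<theta>0))\<^sup>2))"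
proof -
  define g where "g = ?g"
  have g: "g \<omega> = (\<Sum>k\<in>UNIV. \<Sum>j\<in>UNIV. a $ k * a $ j * ((X \<omega> - \<theta>0) $ k * damp \<theta>0 (X \<omega>) $ j))" for \<omega>
  proof -
    have "g \<omega> = (a \<bullet> (X \<omega> - \<theta>0)) * (a \<bullet> damp \<theta>0 (X \<omega>))"
      unfolding g_def damp_def by (simp add: power2_eq_square)
    also have "\<dots> = (\<Sum>k\<in>UNIV. a $ k * (X \<omega> - \<theta>0) $ k) * (\<Sum>j\<in>UNIV. a $ j * damp \<theta>0 (X \<omega>) $ j)"
      unfolding inner_vec_def inner_real_def ..
    finally show ?thesis unfolding sum_product by (simp add: mult_ac)
  qed
  have int: "integrable M (\<lambda>\<omega>. (X \<omega> - \<theta>0) $ k * damp \<theta>0 (X \<omega>) $ j)" for k j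
    using integrable_dev_mult_damp[of X \<theta>0 k j 1] by simp
  show "integrable M ?g" unfolding g_def[symmetric] g using int by simp
  have "expectation g = (\<Sum>k\<in>UNIV. \<Sum>j\<in>UNIV. a $ k * a $ j * damp_moment M X \<theta>0 $ k $ j)"
    unfolding g damp_moment_def using int by (simp add: Bochner_Integration.integral_sum)
  also have "\<dots> = a \<bullet> (damp_moment M X \<theta>0 *v a)"
    unfolding inner_vec_def inner_real_def matrix_vector_mult_def by (simp add: sum_distrib_left mult_ac)
  finally show "a \<bullet> (damp_moment M X \<theta>0 *v a) = expectation ?g" unfolding g_def ..
qed

text \<open>By \<open>inner_damp_moment\<close> the quadratic form vanishes only if \<open>a \<bullet> (X - \<theta>0) = 0\<close> almost surely,
  hence only if \<open>\<Sigma>0 *v a = 0\<close>.\<close>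

lemma (in prob_space) inj_damp_moment:
  fixes X :: "'a \<Rightarrow> real^'d" and \<Sigma>0 :: "real^'d^'d"
  assumes [measurable]: "X \<in> borel_measurable M"
    and sq: "integrable M (\<lambda>\<omega>. (norm (X \<omega>))\<^sup>2)"
    and \<Sigma>0: "\<Sigma>0 = (\<chi> i j. integral\<^sup>L M (\<lambda>\<omega>. (X \<omega> $ i - \<theta>0 $ i) * (X \<omega> $ j - \<theta>0 $ j)))"
    and rank: "rank \<Sigma>0 = CARD('d)"
  shows "inj ((*v) (damp_moment M X \<theta>0))"
  unfolding linear_injective_0[OF matrix_vector_mul_linear]
proof (intro allI impI)
  fix a assume a: "damp_moment M X \<theta>0 *v a = 0"
  define q where "q \<omega> = a \<bullet> (X \<omega> - \<theta>0)" for \<omega>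
  have [measurable]: "q \<in> borel_measurable M" unfolding q_def by measurable
  have pos: "1 + (norm (X \<omega> - \<theta>0))\<^sup>2 \<noteq> 0" for \<omega> by (smt (verit) zero_le_power2)
  have "AE \<omega> in M. (q \<omega>)\<^sup>2 / (1 + (norm (X \<omega> - \<theta>0))\<^sup>2) = 0"
    using inner_damp_moment[of X a \<theta>0] a unfolding q_def
    by (subst integral_nonneg_eq_0_iff_AE[symmetric]) (auto simp: add_pos_nonneg)
  then have q0: "AE \<omega> in M. q \<omega> = 0" by eventually_elim (use pos in simp)
  have "(\<Sigma>0 *v a) $ i = 0" for i
  proof -
    have "(\<Sigma>0 *v a) $ i = (\<Sum>j\<in>UNIV. expectation (\<lambda>\<omega>. (X \<omega> $ i - \<theta>0 $ i) * (X \<omega> $ j - \<theta>0 $ j)) * a $ j)"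
      unfolding \<Sigma>0 matrix_vector_mult_def by simp
    also have "\<dots> = expectation (\<lambda>\<omega>. (X \<omega> $ i - \<theta>0 $ i) * q \<omega>)"
      unfolding q_def inner_vec_def inner_real_def using integrable_dev_mult_dev[OF _ sq]
      by (simp add: Bochner_Integration.integral_sum sum_distrib_left mult_ac)
    also have "\<dots> = expectation (\<lambda>\<omega>. 0)" by (rule integral_cong_AE) (use q0 in auto)
    finally show ?thesis by simp
  qed
  then have "\<Sigma>0 *v a = 0" by (simp add: vec_eq_iff)
  then show "a = 0" using rank full_rank_injective[of \<Sigma>0] by (simp add: inj_on_def)
qed

lemma (in prob_space) square_integrable_vec_nth:
  fixes X :: "'a \<Rightarrow> real^'d"
  assumes [measurable]: "X \<in> borel_measurable M" and sq: "integrable M (\<lambda>\<omega>. (norm (X \<omega>))\<^sup>2)"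
  shows "integrable M (\<lambda>\<omega>. (X \<omega> $ k)\<^sup>2)" and "expectation (\<lambda>\<omega>. X \<omega> $ k) = integral\<^sup>L M X $ k"
proof -
  show "integrable M (\<lambda>\<omega>. (X \<omega> $ k)\<^sup>2)"
  proof (rule Bochner_Integration.integrable_bound[OF sq])
    show "AE \<omega> in M. norm ((X \<omega> $ k)\<^sup>2) \<le> norm ((norm (X \<omega>))\<^sup>2)"
    proof (rule AE_I2)
      fix \<omega>
      show "norm ((X \<omega> $ k)\<^sup>2) \<le> norm ((norm (X \<omega>))\<^sup>2)"
        using power_mono[OF component_le_norm_cart abs_ge_zero, of "X \<omega>" k 2] by simp
    qed
  qed measurable
  have "integrable M (\<lambda>\<omega>. norm (X \<omega>))" using square_integrable_imp_integrable[OF _ sq] by simp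
  then have "integrable M X" by (simp add: integrable_norm_iff)
  then show "expectation (\<lambda>\<omega>. X \<omega> $ k) = integral\<^sup>L M X $ k"
    using integral_bounded_linear[OF bounded_linear_vec_nth] by blast
qed

lemma (in prob_space) prob_Int_ge:
  assumes "A \<in> events" "B \<in> events"
  shows "prob A + prob B - 1 \<le> prob (A \<inter> B)"
proof -
  have "prob (space M - A \<inter> B) \<le> prob (space M - A) + prob (space M - B)"
    unfolding Diff_Int by (rule measure_Un_le) (use assms in auto)
  moreover have "prob (space M - A) = 1 - prob A" "prob (space M - B) = 1 - prob B"
    "prob (space M - A \<inter> B) = 1 - prob (A \<inter> B)"
    using assms by (auto intro!: prob_compl)
  ultimately show ?thesis by linarith
qed

lemma (in prob_space) prob_good_sample:
  fixes X :: "'a \<Rightarrow> real^'d" and Xs :: "nat \<Rightarrow> 'a \<Rightarrow> real^'d" and \<theta>0 :: "real^'d"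
  assumes [measurable]: "X \<in> borel_measurable M" "\<And>i. Xs i \<in> borel_measurable M"
    and indep: "indep_vars (\<lambda>_. borel) Xs UNIV"
    and distr: "\<And>i. distr M borel (Xs i) = distr M borel X"
    and sq: "integrable M (\<lambda>\<omega>. (norm (X \<omega>))\<^sup>2)"
    and \<theta>0: "\<theta>0 = integral\<^sup>L M X"
    and interior: "AE \<omega> in M. Theta_n (\<lambda>i. Xs i \<omega>) n \<noteq> {}"
    and n: "0 < n" and t: "0 < t" and \<eta>: "0 < \<eta>"
  obtains A where "A \<in> events"
    "1 - (\<Sum>k\<in>UNIV. variance (\<lambda>\<omega>. X \<omega> $ k)) / (real n * t\<^sup>2)
       - (\<Sum>kj\<in>UNIV. variance (\<lambda>\<omega>. (X \<omega> - \<theta>0) $ fst kj * damp \<theta>0 (X \<omega>) $ snd kj)) / (real n * \<eta>\<^sup>2)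
       \<le> prob A"
    "\<And>\<omega>. \<omega> \<in> A \<Longrightarrow> Theta_n (\<lambda>i. Xs i \<omega>) n \<noteq> {}"
    "\<And>\<omega> k. \<omega> \<in> A \<Longrightarrow> \<bar>(smean (\<lambda>i. Xs i \<omega>) n - \<theta>0) $ k\<bar> < t"
    "\<And>\<omega> k j. \<omega> \<in> A \<Longrightarrow> \<bar>dev_matrix (\<lambda>i. Xs i \<omega>) n \<theta>0 $ k $ j - damp_moment M X \<theta>0 $ k $ j\<bar> < \<eta>"
proof -
  define g where "g kj v = (v - \<theta>0) $ fst kj * damp \<theta>0 v $ snd kj" for kj :: "'d \<times> 'd" and v
  have [measurable]: "g kj \<in> borel_measurable borel" for kj unfolding g_def by measurable
  define G1 where "G1 = {\<omega> \<in> space M. \<forall>k\<in>UNIV.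
      \<bar>(1 / real n) * (\<Sum>i<n. Xs i \<omega> $ k) - expectation (\<lambda>\<omega>. X \<omega> $ k)\<bar> < t}"
  define G2 where "G2 = {\<omega> \<in> space M. \<forall>kj\<in>UNIV.
      \<bar>(1 / real n) * (\<Sum>i<n. g kj (Xs i \<omega>)) - expectation (\<lambda>\<omega>. g kj (X \<omega>))\<bar> < \<eta>}"
  have G1: "G1 \<in> events" "1 - (\<Sum>k\<in>UNIV. variance (\<lambda>\<omega>. X \<omega> $ k)) / (real n * t\<^sup>2) \<le> prob G1"
    using prob_sample_means_close[OF _ _ indep distr, of UNIV "\<lambda>k v. v $ k" "\<lambda>_. t" n]
      square_integrable_vec_nth[OF _ sq] t n unfolding G1_def
    by (auto simp: sum_divide_distrib[symmetric])
  have G2: "G2 \<in> events" "1 - (\<Sum>kj\<in>UNIV. variance (\<lambda>\<omega>. g kj (X \<omega>))) / (real n * \<eta>\<^sup>2) \<le> prob G2"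
    using prob_sample_means_close[OF _ _ indep distr, of UNIV g "\<lambda>_. \<eta>" n]
      integrable_dev_mult_damp[of X \<theta>0 _ _ 2] \<eta> n unfolding G2_def g_def
    by (auto simp: g_def sum_divide_distrib[symmetric])
  obtain N where N: "N \<in> null_sets M" "\<And>\<omega>. \<omega> \<in> space M - N \<Longrightarrow> Theta_n (\<lambda>i. Xs i \<omega>) n \<noteq> {}"
    using interior by (auto elim!: AE_E intro: null_setsI)
  have "prob (G1 \<inter> G2 - N) = prob (G1 \<inter> G2)" using G1 G2 N by (intro measure_Diff_null_set) auto
  then have prob: "1 - (\<Sum>k\<in>UNIV. variance (\<lambda>\<omega>. X \<omega> $ k)) / (real n * t\<^sup>2)
      - (\<Sum>kj\<in>UNIV. variance (\<lambda>\<omega>. g kj (X \<omega>))) / (real n * \<eta>\<^sup>2) \<le> prob (G1 \<inter> G2 - N)"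
    using prob_Int_ge[OF G1(1) G2(1)] G1(2) G2(2) by linarith
  show ?thesis
  proof (rule that[of "G1 \<inter> G2 - N"])
    show "G1 \<inter> G2 - N \<in> events" using G1 G2 N by auto
    show "1 - (\<Sum>k\<in>UNIV. variance (\<lambda>\<omega>. X \<omega> $ k)) / (real n * t\<^sup>2)
        - (\<Sum>kj\<in>UNIV. variance (\<lambda>\<omega>. (X \<omega> - \<theta>0) $ fst kj * damp \<theta>0 (X \<omega>) $ snd kj)) / (real n * \<eta>\<^sup>2)
        \<le> prob (G1 \<inter> G2 - N)" using prob unfolding g_def .
    fix \<omega> assume \<omega>: "\<omega> \<in> G1 \<inter> G2 - N"
    then show "Theta_n (\<lambda>i. Xs i \<omega>) n \<noteq> {}" using N(2) unfolding G1_def by blast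
    show "\<bar>(smean (\<lambda>i. Xs i \<omega>) n - \<theta>0) $ k\<bar> < t" for k
    proof -
      have "(smean (\<lambda>i. Xs i \<omega>) n - \<theta>0) $ k
          = (1 / real n) * (\<Sum>i<n. Xs i \<omega> $ k) - expectation (\<lambda>\<omega>. X \<omega> $ k)"
        using square_integrable_vec_nth(2)[OF _ sq, of k] \<theta>0 by (simp add: smean_def sum_component)
      then show ?thesis using \<omega> unfolding G1_def by auto
    qed
    show "\<bar>dev_matrix (\<lambda>i. Xs i \<omega>) n \<theta>0 $ k $ j - damp_moment M X \<theta>0 $ k $ j\<bar> < \<eta>" for k j
      using \<omega> unfolding G2_def by (force simp: dev_matrix_def damp_moment_def g_def)
  qed
qed

lemma (in prob_space) hC_inv_rate:
  fixes X :: "'a \<Rightarrow> real^'d" and Xs :: "nat \<Rightarrow> 'a \<Rightarrow> real^'d"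
    and \<theta>0 :: "real^'d" and \<Sigma>0 :: "real^'d^'d"
  assumes [measurable]: "X \<in> borel_measurable M" "\<And>i. Xs i \<in> borel_measurable M"
    and indep: "indep_vars (\<lambda>_. borel) Xs UNIV"
    and distr: "\<And>i. distr M borel (Xs i) = distr M borel X"
    and sq: "integrable M (\<lambda>\<omega>. (norm (X \<omega>))\<^sup>2)"
    and \<theta>0: "\<theta>0 = integral\<^sup>L M X"
    and \<Sigma>0: "\<Sigma>0 = (\<chi> i j. integral\<^sup>L M (\<lambda>\<omega>. (X \<omega> $ i - \<theta>0 $ i) * (X \<omega> $ j - \<theta>0 $ j)))"
    and rank: "rank \<Sigma>0 = CARD('d)"
    and interior: "\<And>n. n > CARD('d) \<Longrightarrow>
           AE \<omega> in M. interior (convex hull ((\<lambda>i. Xs i \<omega>) ` {..<n})) \<noteq> {}"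
    and \<epsilon>: "0 < \<epsilon>"
  shows "\<exists>K N. \<forall>n\<ge>N. \<exists>A\<in>sets M. measure M A \<ge> 1 - \<epsilon> \<and>
           (\<forall>\<omega>\<in>A. norm (hC_inv (\<lambda>i. Xs i \<omega>) n \<theta>0 - \<theta>0) \<le> K * real n powr (-3/2))"
proof -
  obtain c where c: "0 < c" "\<And>a. c * norm a \<le> norm (damp_moment M X \<theta>0 *v a)"
    using linear_inj_bounded_below_pos[OF matrix_vector_mul_linear inj_damp_moment[OF _ sq \<Sigma>0 rank]]
    by auto
  define d where "d = real CARD('d)"
  define \<eta> where "\<eta> = c / (4 * d\<^sup>2)"
  define V where "V = (\<Sum>k\<in>UNIV. variance (\<lambda>\<omega>. X \<omega> $ k))"
  define W where "W = (\<Sum>kj\<in>UNIV. variance (\<lambda>\<omega>. (X \<omega> - \<theta>0) $ fst kj * damp \<theta>0 (X \<omega>) $ snd kj))"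
  define D where "D = sqrt (2 * d\<^sup>2 * V / \<epsilon>) + 1"
  define N where "N = max (Suc CARD('d)) (max (nat \<lceil>2 * W / (\<epsilon> * \<eta>\<^sup>2)\<rceil>) (nat \<lceil>(4 * d * D / c)\<^sup>2\<rceil>))"
  have d: "1 \<le> d" unfolding d_def by simp
  have \<eta>: "0 < \<eta>" unfolding \<eta>_def using c d by simp
  have D: "1 \<le> D" "2 * d\<^sup>2 * V / \<epsilon> \<le> D\<^sup>2"
  proof -
    have q: "0 \<le> 2 * d\<^sup>2 * V / \<epsilon>" unfolding V_def using \<epsilon> by (simp add: sum_nonneg)
    then show "1 \<le> D" unfolding D_def by simp
    have "(sqrt (2 * d\<^sup>2 * V / \<epsilon>))\<^sup>2 \<le> D\<^sup>2" unfolding D_def using q by (intro power_mono) auto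
    then show "2 * d\<^sup>2 * V / \<epsilon> \<le> D\<^sup>2" using q by simp
  qed
  have "\<exists>A\<in>sets M. measure M A \<ge> 1 - \<epsilon> \<and>
           (\<forall>\<omega>\<in>A. norm (hC_inv (\<lambda>i. Xs i \<omega>) n \<theta>0 - \<theta>0) \<le> 8 * D ^ 3 / c\<^sup>2 * real n powr (-3/2))"
    if "N \<le> n" for n
  proof -
    have n: "CARD('d) < n" "2 * W / (\<epsilon> * \<eta>\<^sup>2) \<le> real n" "(4 * d * D / c)\<^sup>2 \<le> real n"
      using that unfolding N_def by linarith+
    then have n0: "0 < n" by simp
    define t where "t = D / (d * sqrt (real n))"
    have t: "0 < t" unfolding t_def using D d n0 by simp
    obtain A where A: "A \<in> events" "1 - V / (real n * t\<^sup>2) - W / (real n * \<eta>\<^sup>2) \<le> prob A"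
      and good: "\<And>\<omega>. \<omega> \<in> A \<Longrightarrow> Theta_n (\<lambda>i. Xs i \<omega>) n \<noteq> {}"
        "\<And>\<omega> k. \<omega> \<in> A \<Longrightarrow> \<bar>(smean (\<lambda>i. Xs i \<omega>) n - \<theta>0) $ k\<bar> < t"
        "\<And>\<omega> k j. \<omega> \<in> A \<Longrightarrow> \<bar>dev_matrix (\<lambda>i. Xs i \<omega>) n \<theta>0 $ k $ j - damp_moment M X \<theta>0 $ k $ j\<bar> < \<eta>"
      by (rule prob_good_sample[OF _ _ indep distr sq \<theta>0 _ n0 t \<eta>, folded V_def W_def])
        (use interior[OF n(1)] in \<open>simp_all add: Theta_n_def\<close>)
    have "V / (real n * t\<^sup>2) \<le> \<epsilon> / 2"
      using D \<epsilon> d n0 unfolding t_def by (simp add: field_simps power_mult_distrib)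
    moreover have "W / (real n * \<eta>\<^sup>2) \<le> \<epsilon> / 2" using n(2) \<epsilon> \<eta> n0 by (simp add: field_simps)
    ultimately have "1 - \<epsilon> \<le> prob A" using A(2) by linarith
    moreover have "norm (hC_inv (\<lambda>i. Xs i \<omega>) n \<theta>0 - \<theta>0) \<le> 8 * D ^ 3 / c\<^sup>2 * real n powr (-3/2)"
      if "\<omega> \<in> A" for \<omega>
    proof (rule hC_inv_dist_le_powr[OF n0 good(1)[OF that] c(1,2)])
      show "\<bar>(smean (\<lambda>i. Xs i \<omega>) n - \<theta>0) $ k\<bar> < D / (real CARD('d) * sqrt (real n))" for k
        using good(2)[OF that] unfolding t_def d_def .
      show "\<bar>dev_matrix (\<lambda>i. Xs i \<omega>) n \<theta>0 $ k $ j - damp_moment M X \<theta>0 $ k $ j\<bar>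
          < c / (4 * real CARD('d) ^ 2)" for k j
        using good(3)[OF that] unfolding \<eta>_def d_def .
      show "(4 * real CARD('d) * D / c)\<^sup>2 \<le> real n" using n(3) unfolding d_def .
    qed
    ultimately show ?thesis using A(1) by blast
  qed
  then show ?thesis by blast
qed

theorem lemma2:
  fixes M :: "'a measure" and X :: "'a \<Rightarrow> real^'d" and Xs :: "nat \<Rightarrow> 'a \<Rightarrow> real^'d"
    and \<theta>0 :: "real^'d" and \<Sigma>0 :: "real^'d^'d"
  assumes "prob_space M"
    and "X \<in> borel_measurable M"
    and "\<And>i. Xs i \<in> borel_measurable M"
    and "prob_space.indep_vars M (\<lambda>_. borel) Xs UNIV"
    and "\<And>i. distr M borel (Xs i) = distr M borel X"
    and "integrable M (\<lambda>\<omega>. (norm (X \<omega>))\<^sup>2)"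
    and "\<theta>0 = integral\<^sup>L M X"
    and "\<Sigma>0 = (\<chi> i j. integral\<^sup>L M (\<lambda>\<omega>. (X \<omega> $ i - \<theta>0 $ i) * (X \<omega> $ j - \<theta>0 $ j)))"
    and "rank \<Sigma>0 = CARD('d)"
    and "\<And>n. n > CARD('d) \<Longrightarrow>
           AE \<omega> in M. interior (convex hull ((\<lambda>i. Xs i \<omega>) ` {..<n})) \<noteq> {}"
  shows "(\<forall>n > CARD('d). \<forall>\<omega>. interior (convex hull ((\<lambda>i. Xs i \<omega>) ` {..<n})) \<noteq> {} \<longrightarrow>
            hC_inv (\<lambda>i. Xs i \<omega>) n \<theta>0 \<in> closed_segment (smean (\<lambda>i. Xs i \<omega>) n) \<theta>0)
       \<and> (\<forall>\<epsilon>>0. \<exists>K. \<exists>N. \<forall>n\<ge>N. \<exists>A\<in>sets M. measure M A \<ge> 1 - \<epsilon> \<and>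
            (\<forall>\<omega>\<in>A. norm (hC_inv (\<lambda>i. Xs i \<omega>) n \<theta>0 - \<theta>0) \<le> K * real n powr (-3/2)))"
proof -
  interpret prob_space M by fact
  have "hC_inv (\<lambda>i. Xs i \<omega>) n \<theta>0 \<in> closed_segment (smean (\<lambda>i. Xs i \<omega>) n) \<theta>0"
    if "n > CARD('d)" "interior (convex hull ((\<lambda>i. Xs i \<omega>) ` {..<n})) \<noteq> {}" for n \<omega>
    using that by (intro hC_inv_in_closed_segment) (auto simp: Theta_n_def)
  moreover have "\<exists>K N. \<forall>n\<ge>N. \<exists>A\<in>sets M. measure M A \<ge> 1 - \<epsilon> \<and>
      (\<forall>\<omega>\<in>A. norm (hC_inv (\<lambda>i. Xs i \<omega>) n \<theta>0 - \<theta>0) \<le> K * real n powr (-3/2))" if "0 < \<epsilon>" for \<epsilon>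
    by (rule hC_inv_rate[OF assms(2-10) that])
  ultimately show ?thesis by blast
qed

end
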